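(* Let $0<\epsilon<\frac{\sqrt2}{2}$ be a constant. There is a constant $c>0$ such that the following holds for every function $m=m(n)\ge 0$. Consider the fraction of matrices $\mathbf M\in\mathrm{GL}(n,2)$ with the following property: every $n$-qubit $m$-ancilla quantum circuit that $\epsilon$-approximates the CNOT circuit $\mathbf M$ has depth at least $$c\cdot\max\left\{\log n,\ \frac{n^2}{(n+m)\log(n+m)}\right\}.$$ This fraction tends to $1$ as $n\to\infty$.
   Context: Quantum circuits here consist of arbitrary single-qubit and two-qubit unitary gates. The depth of a circuit is the number of layers, where each layer consists of gates acting on pairwise disjoint qubits. A matrix $\mathbf M\in\mathrm{GL}(n,2)$ is identified with the $n$-qubit CNOT circuit $\mathcal C_1$ acting by $|\mathbf x\rangle\mapsto|\mathbf M\mathbf x\rangle$ on computational basis states. An $n$-qubit $m$-ancilla quantum circuit $\mathcal C_2$ is a circuit on $n+m$ qubits. It $\epsilon$-approximates $\mathcal C_1$ if for every $\mathbf x\in\{0,1\}^n$ two conditions hold: - $\mathcal C_2|\mathbf x\rangle|0\rangle^{\otimes m}=|\varphi_{\mathbf x}\rangle|0\rangle^{\otimes m}$ for some unit vector $|\varphi_{\mathbf x}\rangle\in\mathbb C^{2^n}$; - $\||\varphi_{\mathbf x}\rangle-\mathcal C_1|\mathbf x\rangle\|_2<\epsilon$. Logarithms are base 2. *)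

theory Defs
  imports Complex_Main "HOL-Library.Z2" "Jordan_Normal_Form.Matrix" "Jordan_Normal_Form.Schur_Decomposition"
begin

definition GL2 :: "nat \<Rightarrow> bit mat set" where
  "GL2 n = {M \<in> carrier_mat n n. invertible_mat M}"

(* Computational basis encoding: qubit i corresponds to bit i of the basis index. *)
definition bidx :: "bit vec \<Rightarrow> nat" where
  "bidx x = (\<Sum>i<dim_vec x. if x $ i = 1 then 2 ^ i else 0)"

definition vnorm :: "complex vec \<Rightarrow> real" where
  "vnorm v = sqrt (\<Sum>i<dim_vec v. (cmod (v $ i))\<^sup>2)"

definition unitary_mat :: "nat \<Rightarrow> complex mat \<Rightarrow> bool" where
  "unitary_mat d U \<longleftrightarrow> U \<in> carrier_mat d d \<and> U * mat_adjoint U = 1\<^sub>m d \<and> mat_adjoint U * U = 1\<^sub>m d"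

(* G is a unitary on N qubits of the form U (x) Id, where U acts on the qubits in Q *)
definition gate_on :: "nat \<Rightarrow> nat set \<Rightarrow> complex mat \<Rightarrow> bool" where
  "gate_on N Q G \<longleftrightarrow> Q \<subseteq> {..<N} \<and> (card Q = 1 \<or> card Q = 2) \<and> unitary_mat (2 ^ N) G \<and>
     (\<exists>g. \<forall>x<2 ^ N. \<forall>y<2 ^ N. G $$ (x, y) =
        (if \<forall>i<N. i \<notin> Q \<longrightarrow> bit x i = bit y i
         then g (\<lambda>i. i \<in> Q \<and> bit x i) (\<lambda>i. i \<in> Q \<and> bit y i) else 0))"

definition is_layer :: "nat \<Rightarrow> (nat set \<times> complex mat) list \<Rightarrow> bool" where
  "is_layer N L \<longleftrightarrow> (\<forall>(Q, G) \<in> set L. gate_on N Q G) \<and>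
     (\<forall>i<length L. \<forall>j<length L. i \<noteq> j \<longrightarrow> fst (L ! i) \<inter> fst (L ! j) = {})"

definition layer_op :: "nat \<Rightarrow> (nat set \<times> complex mat) list \<Rightarrow> complex mat" where
  "layer_op N L = foldr (\<lambda>(Q, G) acc. G * acc) L (1\<^sub>m (2 ^ N))"

definition is_circuit :: "nat \<Rightarrow> (nat set \<times> complex mat) list list \<Rightarrow> bool" where
  "is_circuit N C \<longleftrightarrow> (\<forall>L \<in> set C. is_layer N L)"

(* first layer of the list is applied first *)
definition circuit_op :: "nat \<Rightarrow> (nat set \<times> complex mat) list list \<Rightarrow> complex mat" where
  "circuit_op N C = foldl (\<lambda>acc L. layer_op N L * acc) (1\<^sub>m (2 ^ N)) C"

definition depth :: "(nat set \<times> complex mat) list list \<Rightarrow> nat" where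
  "depth C = length C"

(* C is an n-qubit m-ancilla circuit that eps-approximates the CNOT circuit M;
   data qubits 0..n-1, ancillas n..n+m-1 *)
definition approximates :: "nat \<Rightarrow> nat \<Rightarrow> real \<Rightarrow> (nat set \<times> complex mat) list list \<Rightarrow> bit mat \<Rightarrow> bool" where
  "approximates n m eps C M \<longleftrightarrow> is_circuit (n + m) C \<and>
     (\<forall>x \<in> carrier_vec n. \<exists>\<phi> \<in> carrier_vec (2 ^ n). vnorm \<phi> = 1 \<and>
        circuit_op (n + m) C *\<^sub>v unit_vec (2 ^ (n + m)) (bidx x)
          = vec (2 ^ (n + m)) (\<lambda>j. if j < 2 ^ n then \<phi> $ j else 0) \<and>
        vnorm (\<phi> - unit_vec (2 ^ n) (bidx (M *\<^sub>v x))) < eps)"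

end

theory Submission
  imports Defs "HOL-Analysis.L2_Norm" "HOL-Analysis.Convex" "HOL-Real_Asymp.Real_Asymp"
begin

(* Two counting arguments, one for each term of the maximum.

   Light cones: conjugating the projector onto output qubit i by a circuit of depth d gives an
   operator acting only on the backward light cone of i, which has at most 3^d qubits.  The
   probability of reading bit i of Mx is therefore determined by the input bits in that cone, so
   every row of a matrix M approximated in depth d has at most 3^d ones.  Below depth (log n)/4
   this leaves at most (n+1)^(n sqrt n) matrices, a vanishing fraction of
   |GL(n,2)| >= 2^((n^2-1)/4).

   Discretization: rounding every gate entry to a grid of mesh t/(8n^2) moves a circuit with at
   most n^2 gates by at most 3t, while circuits approximating different matrices stay
   sqrt 2 - 2 eps apart on some basis vector; so distinct matrices have distinct rounded
   circuits.  On n + m qubits there are at most Z^((n+m) d) rounded circuits of depth d, with Z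
   polynomial in n + m, which is below 2^(n^2/8) for d <= c n^2 / ((n+m) log (n+m)). *)

section \<open>Basis states as bit strings\<close>

definition nat_of_bits :: "nat \<Rightarrow> (nat \<Rightarrow> bool) \<Rightarrow> nat" where
  "nat_of_bits N f = horner_sum of_bool 2 (map f [0..<N])"

lemma bit_nat_of_bits: "bit (nat_of_bits N f) i \<longleftrightarrow> i < N \<and> f i"
  unfolding nat_of_bits_def by (auto simp: bit_horner_sum_bit_iff)

lemma nat_of_bits_less: "nat_of_bits N f < 2 ^ N"
  unfolding nat_of_bits_def using horner_sum_of_bool_2_less[of "map f [0..<N]"] by simp

lemma not_bit_ge_length: "(x::nat) < 2 ^ N \<Longrightarrow> N \<le> i \<Longrightarrow> \<not> bit x i"
  by (metis bit_take_bit_iff not_less take_bit_nat_eq_self_iff)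

lemma nat_eq_if_low_bits_eq:
  "(x::nat) < 2 ^ N \<Longrightarrow> y < 2 ^ N \<Longrightarrow> (\<And>i. i < N \<Longrightarrow> bit x i = bit y i) \<Longrightarrow> x = y"
  by (metis bit_eq_iff not_bit_ge_length not_less)

definition splice_bits :: "nat \<Rightarrow> nat set \<Rightarrow> nat \<Rightarrow> nat \<Rightarrow> nat" where
  "splice_bits N W a b = nat_of_bits N (\<lambda>i. if i \<in> W then bit a i else bit b i)"

lemma splice_bits_less: "splice_bits N W a b < 2 ^ N"
  unfolding splice_bits_def by (rule nat_of_bits_less)

lemma bit_splice_bits: "i < N \<Longrightarrow> bit (splice_bits N W a b) i = (if i \<in> W then bit a i else bit b i)"
  unfolding splice_bits_def bit_nat_of_bits by simp

definition agree_off :: "nat \<Rightarrow> nat set \<Rightarrow> nat \<Rightarrow> nat \<Rightarrow> bool" where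
  "agree_off N S x y \<longleftrightarrow> (\<forall>i<N. i \<notin> S \<longrightarrow> bit x i = bit y i)"

lemma agree_off_sym: "agree_off N S x y \<Longrightarrow> agree_off N S y x"
  unfolding agree_off_def by auto

lemma agree_off_mono: "agree_off N S x y \<Longrightarrow> S \<subseteq> S' \<Longrightarrow> agree_off N S' x y"
  unfolding agree_off_def by blast

lemma card_agree_off_le:
  assumes "S \<subseteq> {..<N}"
  shows "card {y. y < 2 ^ N \<and> agree_off N S x y} \<le> 2 ^ card S"
proof -
  let ?Y = "{y. y < 2 ^ N \<and> agree_off N S x y}"
  have fin: "finite S" using assms finite_subset by blast
  have "inj_on (\<lambda>y. restrict (bit y) S) ?Y"
  proof (rule inj_onI)
    fix y y' assume y: "y \<in> ?Y" and y': "y' \<in> ?Y" and e: "restrict (bit y) S = restrict (bit y') S"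
    have "bit y i = bit y' i" if "i < N" for i
      using fun_cong[OF e, of i] y y' that unfolding agree_off_def by (cases "i \<in> S") auto
    then show "y = y'" using y y' by (intro nat_eq_if_low_bits_eq) auto
  qed
  then have "card ?Y = card ((\<lambda>y. restrict (bit y) S) ` ?Y)" by (simp add: card_image)
  also have "\<dots> \<le> card (PiE S (\<lambda>_. UNIV :: bool set))"
    by (rule card_mono) (auto simp: fin finite_PiE)
  also have "\<dots> = 2 ^ card S" by (simp add: card_PiE fin)
  finally show ?thesis .
qed

lemma bij_betw_splice_bits:
  "bij_betw (\<lambda>z. splice_bits N W z x') {z. z < 2 ^ N \<and> agree_off N W x z} {z. z < 2 ^ N \<and> agree_off N W x' z}"
proof (rule bij_betw_byWitness[where f' = "\<lambda>z. splice_bits N W z x"])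
  have "splice_bits N W (splice_bits N W z u) v = z" if "z < 2 ^ N" "agree_off N W v z" for z u v
    using that by (intro nat_eq_if_low_bits_eq[OF splice_bits_less]) (simp_all add: bit_splice_bits agree_off_def)
  then show "\<forall>z\<in>{z. z < 2 ^ N \<and> agree_off N W x z}. splice_bits N W (splice_bits N W z x') x = z"
    "\<forall>z\<in>{z. z < 2 ^ N \<and> agree_off N W x' z}. splice_bits N W (splice_bits N W z x) x' = z"
    by auto
qed (auto simp: splice_bits_less agree_off_def bit_splice_bits)

lemma bidx_eq_nat_of_bits: "dim_vec v = n \<Longrightarrow> bidx v = nat_of_bits n (\<lambda>i. v $ i = 1)"
  unfolding bidx_def nat_of_bits_def horner_sum_eq_sum by (simp add: atLeast0LessThan sum.If_cases)

lemma bidx_less: "dim_vec v = n \<Longrightarrow> bidx v < 2 ^ n"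
  using bidx_eq_nat_of_bits nat_of_bits_less by metis

lemma bit_bidx: "dim_vec v = n \<Longrightarrow> bit (bidx v) i \<longleftrightarrow> i < n \<and> v $ i = 1"
  using bidx_eq_nat_of_bits bit_nat_of_bits by metis

lemma bit_cases: "(b::bit) = 0 \<or> b = 1"
  by (cases b) auto

lemma bidx_inj:
  assumes "dim_vec v = n" "dim_vec w = n" "bidx v = bidx w"
  shows "v = w"
proof (rule eq_vecI)
  fix i assume "i < dim_vec w"
  then have "v $ i = 1 \<longleftrightarrow> w $ i = 1" using bit_bidx[OF assms(1), of i] bit_bidx[OF assms(2), of i] assms by simp
  then show "v $ i = w $ i" using bit_cases[of "v $ i"] bit_cases[of "w $ i"] by auto
qed (use assms in simp)

section \<open>Norms, unitary matrices and perturbed products\<close>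

lemma vnorm_eq_L2_set: "vnorm v = L2_set (\<lambda>i. cmod (v $ i)) {..<dim_vec v}"
  unfolding vnorm_def L2_set_def by simp

lemma vnorm_square: "(vnorm v)\<^sup>2 = (\<Sum>i<dim_vec v. (cmod (v $ i))\<^sup>2)"
  unfolding vnorm_def by (simp add: sum_nonneg)

lemma vnorm_nonneg: "vnorm v \<ge> 0"
  unfolding vnorm_def by (simp add: sum_nonneg)

lemma vnorm_add_le: "dim_vec w = dim_vec v \<Longrightarrow> vnorm (v + w) \<le> vnorm v + vnorm w"
proof -
  assume d: "dim_vec w = dim_vec v"
  have "vnorm (v + w) = L2_set (\<lambda>i. cmod (v $ i + w $ i)) {..<dim_vec v}"
    unfolding vnorm_eq_L2_set using d by (intro L2_set_cong) auto
  also have "\<dots> \<le> L2_set (\<lambda>i. cmod (v $ i) + cmod (w $ i)) {..<dim_vec v}"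
    by (intro L2_set_mono) (auto simp: norm_triangle_ineq)
  also have "\<dots> \<le> vnorm v + vnorm w"
    unfolding vnorm_eq_L2_set using d by (simp add: L2_set_triangle_ineq)
  finally show ?thesis .
qed

lemma vnorm_diff_triangle:
  "dim_vec v = dim_vec u \<Longrightarrow> dim_vec w = dim_vec u \<Longrightarrow> vnorm (u - w) \<le> vnorm (u - v) + vnorm (v - w)"
proof -
  assume "dim_vec v = dim_vec u" "dim_vec w = dim_vec u"
  moreover from this have "u - w = (u - v) + (v - w)" by (intro eq_vecI) auto
  ultimately show ?thesis using vnorm_add_le[of "v - w" "u - v"] by simp
qed

lemma vnorm_minus_commute: "dim_vec w = dim_vec v \<Longrightarrow> vnorm (v - w) = vnorm (w - v)"
proof -
  assume d: "dim_vec w = dim_vec v"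
  have "(\<Sum>i<dim_vec (v - w). (cmod ((v - w) $ i))\<^sup>2) = (\<Sum>i<dim_vec (w - v). (cmod ((w - v) $ i))\<^sup>2)"
    using d by (intro sum.cong) (auto intro: arg_cong[where f="\<lambda>x. x^2"] norm_minus_commute)
  then show ?thesis unfolding vnorm_def by simp
qed

lemma vnorm_diff_le_add: "dim_vec w = dim_vec v \<Longrightarrow> vnorm (v - w) \<le> vnorm v + vnorm w"
proof -
  assume d: "dim_vec w = dim_vec v"
  have "vnorm (v - w) \<le> vnorm (v - 0\<^sub>v (dim_vec v)) + vnorm (0\<^sub>v (dim_vec v) - w)"
    by (rule vnorm_diff_triangle) (simp_all add: d)
  also have "v - 0\<^sub>v (dim_vec v) = v" by (intro eq_vecI) auto
  also have "vnorm (0\<^sub>v (dim_vec v) - w) = vnorm w"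
    unfolding vnorm_def using d by (auto intro!: arg_cong[where f=sqrt] sum.cong)
  finally show ?thesis .
qed

lemma vnorm_unit_vec: "i < D \<Longrightarrow> vnorm (unit_vec D i) = 1"
proof -
  assume i: "i < D"
  have "(\<Sum>j<D. (cmod (unit_vec D i $ j))\<^sup>2) = (\<Sum>j<D. if j = i then 1 else 0)"
    using i by (intro sum.cong refl) auto
  then show ?thesis unfolding vnorm_def using i by simp
qed

lemma vnorm_unit_vec_diff:
  assumes "y < D" "y' < D" "y \<noteq> y'"
  shows "vnorm (unit_vec D y - unit_vec D y') = sqrt 2"
proof -
  have "(\<Sum>i<D. (cmod ((unit_vec D y - unit_vec D y') $ i))\<^sup>2)
      = (\<Sum>i<D. (if i = y then 1 else 0) + (if i = y' then 1 else 0))"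
    using assms by (intro sum.cong refl) auto
  also have "\<dots> = 2" using assms by (simp add: sum.distrib)
  finally show ?thesis unfolding vnorm_def by simp
qed

lemma sum_lessThan_single:
  fixes D z0 :: nat
  assumes "z0 < D" "\<And>z. z < D \<Longrightarrow> z \<noteq> z0 \<Longrightarrow> f z = 0"
  shows "(\<Sum>z<D. f z) = (f z0 :: 'a :: comm_monoid_add)"
proof -
  have "(\<Sum>z<D. f z) = (\<Sum>z\<in>{z0}. f z)"
    by (rule sum.mono_neutral_right) (use assms in auto)
  then show ?thesis by simp
qed

lemma index_mult_mat_vec_sum:
  "A \<in> carrier_mat n k \<Longrightarrow> v \<in> carrier_vec k \<Longrightarrow> i < n \<Longrightarrow> (A *\<^sub>v v) $ i = (\<Sum>j<k. A $$ (i, j) * v $ j)"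
  by (simp add: scalar_prod_def atLeast0LessThan)

lemma index_mult_mat_sum:
  "A \<in> carrier_mat a b \<Longrightarrow> B \<in> carrier_mat b c \<Longrightarrow> x < a \<Longrightarrow> y < c \<Longrightarrow>
   (A * B) $$ (x, y) = (\<Sum>z<b. A $$ (x, z) * B $$ (z, y))"
  by (simp add: scalar_prod_def atLeast0LessThan)

lemma mult_mat_vec_unit_vec:
  fixes U :: "'a :: comm_ring_1 mat"
  shows "U \<in> carrier_mat D D \<Longrightarrow> x < D \<Longrightarrow> w < D \<Longrightarrow> (U *\<^sub>v unit_vec D x) $ w = U $$ (w, x)"
proof -
  assume U: "U \<in> carrier_mat D D" and x: "x < D" and w: "w < D"
  have "(U *\<^sub>v unit_vec D x) $ w = (\<Sum>j<D. U $$ (w, j) * unit_vec D x $ j)"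
    by (rule index_mult_mat_vec_sum[OF U _ w]) simp
  also have "\<dots> = U $$ (w, x) * unit_vec D x $ x"
    by (rule sum_lessThan_single[OF x]) (use x in simp)
  finally show ?thesis using x by simp
qed

lemma eq_mat_if_mult_vec_eq:
  fixes M M' :: "'a :: comm_ring_1 mat"
  assumes "M \<in> carrier_mat n n" "M' \<in> carrier_mat n n" "\<And>v. v \<in> carrier_vec n \<Longrightarrow> M *\<^sub>v v = M' *\<^sub>v v"
  shows "M = M'"
proof (rule eq_matI)
  fix i j assume "i < dim_row M'" "j < dim_col M'"
  then have i: "i < n" and j: "j < n" using assms(2) by auto
  have "M $$ (i, j) = (M *\<^sub>v unit_vec n j) $ i" using assms(1) i j by simp
  also have "\<dots> = (M' *\<^sub>v unit_vec n j) $ i" using assms(3)[of "unit_vec n j"] by simp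
  finally show "M $$ (i, j) = M' $$ (i, j)" using assms(2) i j by simp
qed (use assms in auto)

lemma index_mat_adjoint:
  "i < dim_col A \<Longrightarrow> j < dim_row A \<Longrightarrow> mat_adjoint A $$ (i, j) = cnj (A $$ (j, i))"
  "dim_row (mat_adjoint A) = dim_col A" "dim_col (mat_adjoint A) = dim_row A"
  unfolding mat_adjoint_def mat_of_rows_def by (auto simp: cols_def)

lemma carrier_mat_adjoint: "(A::complex mat) \<in> carrier_mat n k \<Longrightarrow> mat_adjoint A \<in> carrier_mat k n"
  using index_mat_adjoint(2,3)[of A] unfolding carrier_mat_def by auto

lemma mat_adjoint_mult:
  fixes A B :: "complex mat"
  assumes A: "A \<in> carrier_mat n k" and B: "B \<in> carrier_mat k l"
  shows "mat_adjoint (A * B) = mat_adjoint B * mat_adjoint A"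
proof (rule eq_matI)
  have aA: "mat_adjoint A \<in> carrier_mat k n" and aB: "mat_adjoint B \<in> carrier_mat l k"
    using carrier_mat_adjoint A B by auto
  show "dim_row (mat_adjoint (A * B)) = dim_row (mat_adjoint B * mat_adjoint A)"
    "dim_col (mat_adjoint (A * B)) = dim_col (mat_adjoint B * mat_adjoint A)"
    using A B aA aB by (auto simp: index_mat_adjoint)
  fix i j assume "i < dim_row (mat_adjoint B * mat_adjoint A)" "j < dim_col (mat_adjoint B * mat_adjoint A)"
  then have i: "i < l" and j: "j < n" using aA aB by auto
  have "mat_adjoint (A * B) $$ (i, j) = cnj (\<Sum>z<k. A $$ (j, z) * B $$ (z, i))"
    using A B i j by (simp add: index_mat_adjoint index_mult_mat_sum[OF A B j i])
  also have "\<dots> = (\<Sum>z<k. mat_adjoint B $$ (i, z) * mat_adjoint A $$ (z, j))"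
    using A B i j by (simp add: index_mat_adjoint cnj_sum mult.commute)
  also have "\<dots> = (mat_adjoint B * mat_adjoint A) $$ (i, j)" by (rule index_mult_mat_sum[OF aB aA i j, symmetric])
  finally show "mat_adjoint (A * B) $$ (i, j) = (mat_adjoint B * mat_adjoint A) $$ (i, j)" .
qed

lemma mat_adjoint_one: "mat_adjoint (1\<^sub>m D :: complex mat) = 1\<^sub>m D"
  by (rule eq_matI) (auto simp: index_mat_adjoint)

lemma unitary_mat_col_orthonormal:
  assumes "unitary_mat d U" "k < d" "j < d"
  shows "(\<Sum>i<d. cnj (U $$ (i, k)) * U $$ (i, j)) = (if k = j then 1 else 0)"
proof -
  have U: "U \<in> carrier_mat d d" and h: "mat_adjoint U * U = 1\<^sub>m d"
    using assms(1) unfolding unitary_mat_def by auto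
  have "(mat_adjoint U * U) $$ (k, j) = (\<Sum>i<d. mat_adjoint U $$ (k, i) * U $$ (i, j))"
    by (rule index_mult_mat_sum[OF carrier_mat_adjoint[OF U] U assms(2,3)])
  also have "\<dots> = (\<Sum>i<d. cnj (U $$ (i, k)) * U $$ (i, j))"
    using U assms(2) by (intro sum.cong refl) (simp add: index_mat_adjoint)
  finally show ?thesis using h assms by simp
qed

lemma unitary_mat_entry_norm_le:
  assumes "unitary_mat d U" "i < d" "j < d"
  shows "cmod (U $$ (i, j)) \<le> 1"
proof -
  have "(\<Sum>l<d. cnj (U $$ (l, j)) * U $$ (l, j)) = complex_of_real (\<Sum>l<d. (cmod (U $$ (l, j)))\<^sup>2)"
    by (simp only: of_real_sum complex_norm_square mult.commute)
  then have s: "(\<Sum>l<d. (cmod (U $$ (l, j)))\<^sup>2) = 1"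
    using unitary_mat_col_orthonormal[OF assms(1) assms(3) assms(3)] by (metis of_real_eq_1_iff)
  have "(cmod (U $$ (i, j)))\<^sup>2 \<le> (\<Sum>l<d. (cmod (U $$ (l, j)))\<^sup>2)"
    by (rule member_le_sum) (auto simp: assms)
  then show ?thesis using s by (simp add: power_le_one_iff)
qed

lemma unitary_mat_vnorm:
  assumes "unitary_mat d U" "v \<in> carrier_vec d"
  shows "vnorm (U *\<^sub>v v) = vnorm v"
proof -
  have U: "U \<in> carrier_mat d d" using assms(1) unfolding unitary_mat_def by auto
  have e: "(U *\<^sub>v v) $ i = (\<Sum>j<d. U $$ (i, j) * v $ j)" if "i < d" for i
    by (rule index_mult_mat_vec_sum[OF U assms(2) that])
  have dU: "dim_vec (U *\<^sub>v v) = d" using U by simp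
  have dv: "dim_vec v = d" using assms(2) by simp
  have "complex_of_real ((vnorm (U *\<^sub>v v))\<^sup>2) = (\<Sum>i<d. (U *\<^sub>v v) $ i * cnj ((U *\<^sub>v v) $ i))"
    unfolding vnorm_square dU by (simp only: of_real_sum complex_norm_square)
  also have "\<dots> = (\<Sum>i<d. \<Sum>j<d. \<Sum>k<d. v $ j * cnj (v $ k) * (cnj (U $$ (i, k)) * U $$ (i, j)))"
    by (intro sum.cong refl) (simp add: e sum_product mult.commute mult.left_commute)
  also have "\<dots> = (\<Sum>j<d. \<Sum>i<d. \<Sum>k<d. v $ j * cnj (v $ k) * (cnj (U $$ (i, k)) * U $$ (i, j)))"
    by (rule sum.swap)
  also have "\<dots> = (\<Sum>j<d. \<Sum>k<d. \<Sum>i<d. v $ j * cnj (v $ k) * (cnj (U $$ (i, k)) * U $$ (i, j)))"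
    by (rule sum.cong[OF refl], rule sum.swap)
  also have "\<dots> = (\<Sum>j<d. \<Sum>k<d. v $ j * cnj (v $ k) * (\<Sum>i<d. cnj (U $$ (i, k)) * U $$ (i, j)))"
    by (simp add: sum_distrib_left)
  also have "\<dots> = (\<Sum>j<d. v $ j * cnj (v $ j))"
    by (intro sum.cong refl) (simp add: unitary_mat_col_orthonormal[OF assms(1)] if_distrib sum.delta cong: if_cong)
  also have "\<dots> = complex_of_real ((vnorm v)\<^sup>2)"
    unfolding vnorm_square dv by (simp only: of_real_sum complex_norm_square)
  finally have "(vnorm (U *\<^sub>v v))\<^sup>2 = (vnorm v)\<^sup>2" using of_real_eq_iff by blast
  then show ?thesis using vnorm_nonneg[of v] vnorm_nonneg[of "U *\<^sub>v v"] by (simp add: power2_eq_iff_nonneg)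
qed

lemma sum_symmetric_neighbourhoods_le:
  fixes f :: "nat \<Rightarrow> real"
  assumes sym: "\<And>x y. R x y \<Longrightarrow> R y x" and deg: "\<And>x. x < d \<Longrightarrow> card {y. y < d \<and> R x y} \<le> K"
    and f: "\<And>y. f y \<ge> 0"
  shows "(\<Sum>x<d. \<Sum>y\<in>{y. y < d \<and> R x y}. f y) \<le> K * (\<Sum>y<d. f y)"
proof -
  have "(\<Sum>x<d. \<Sum>y\<in>{y. y < d \<and> R x y}. f y) = (\<Sum>x<d. \<Sum>y<d. if R x y then f y else 0)"
    by (simp add: sum.inter_filter[symmetric])
  also have "\<dots> = (\<Sum>y<d. \<Sum>x<d. if R x y then f y else 0)"
    by (rule sum.swap)
  also have "\<dots> = (\<Sum>y<d. f y * card {x. x < d \<and> R x y})"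
    by (simp add: sum.inter_filter[symmetric] mult.commute)
  also have "\<dots> = (\<Sum>y<d. f y * card {x. x < d \<and> R y x})"
  proof -
    have "{x. x < d \<and> R x y} = {x. x < d \<and> R y x}" for y using sym by blast
    then show ?thesis by simp
  qed
  also have "\<dots> \<le> (\<Sum>y<d. f y * K)"
    by (intro sum_mono mult_left_mono) (auto simp: deg f)
  finally show ?thesis by (simp add: sum_distrib_left mult.commute)
qed

lemma vnorm_mult_sparse_le:
  fixes E :: "complex mat"
  assumes E: "E \<in> carrier_mat d d" and v: "v \<in> carrier_vec d"
    and zero: "\<And>x y. x < d \<Longrightarrow> y < d \<Longrightarrow> \<not> R x y \<Longrightarrow> E $$ (x, y) = 0"
    and small: "\<And>x y. x < d \<Longrightarrow> y < d \<Longrightarrow> cmod (E $$ (x, y)) \<le> \<delta>"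
    and sym: "\<And>x y. R x y \<Longrightarrow> R y x"
    and deg: "\<And>x. x < d \<Longrightarrow> card {y. y < d \<and> R x y} \<le> K"
    and "\<delta> \<ge> 0"
  shows "vnorm (E *\<^sub>v v) \<le> real K * \<delta> * vnorm v"
proof -
  define A where "A x = {y. y < d \<and> R x y}" for x
  have row: "(cmod ((E *\<^sub>v v) $ x))\<^sup>2 \<le> real K * \<delta>\<^sup>2 * (\<Sum>y\<in>A x. (cmod (v $ y))\<^sup>2)" if x: "x < d" for x
  proof -
    have "(E *\<^sub>v v) $ x = (\<Sum>y\<in>A x. E $$ (x, y) * v $ y)"
      unfolding index_mult_mat_vec_sum[OF E v x] by (rule sum.mono_neutral_right) (auto simp: A_def zero x)
    then have "cmod ((E *\<^sub>v v) $ x) \<le> (\<Sum>y\<in>A x. cmod (E $$ (x, y) * v $ y))"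
      by (simp add: norm_sum)
    also have "\<dots> \<le> (\<Sum>y\<in>A x. \<delta> * cmod (v $ y))"
      by (intro sum_mono) (auto simp: norm_mult A_def intro!: mult_right_mono small x)
    finally have "(cmod ((E *\<^sub>v v) $ x))\<^sup>2 \<le> (\<Sum>y\<in>A x. \<delta> * cmod (v $ y))\<^sup>2"
      by (rule power_mono) simp
    also have "\<dots> \<le> (\<Sum>y\<in>A x. (\<delta> * cmod (v $ y))\<^sup>2) * card (A x)"
      by (rule sum_squared_le_sum_of_squares)
    also have "\<dots> \<le> (\<Sum>y\<in>A x. (\<delta> * cmod (v $ y))\<^sup>2) * K"
      by (intro mult_left_mono) (auto simp: A_def deg x sum_nonneg)
    also have "\<dots> = real K * \<delta>\<^sup>2 * (\<Sum>y\<in>A x. (cmod (v $ y))\<^sup>2)"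
      by (simp add: power_mult_distrib sum_distrib_left mult_ac)
    finally show ?thesis .
  qed
  have "(vnorm (E *\<^sub>v v))\<^sup>2 = (\<Sum>x<d. (cmod ((E *\<^sub>v v) $ x))\<^sup>2)"
    using E by (simp add: vnorm_square)
  also have "\<dots> \<le> (\<Sum>x<d. real K * \<delta>\<^sup>2 * (\<Sum>y\<in>A x. (cmod (v $ y))\<^sup>2))"
    by (intro sum_mono row) simp
  also have "\<dots> = real K * \<delta>\<^sup>2 * (\<Sum>x<d. \<Sum>y\<in>A x. (cmod (v $ y))\<^sup>2)"
    by (simp add: sum_distrib_left)
  also have "\<dots> \<le> real K * \<delta>\<^sup>2 * (K * (\<Sum>y<d. (cmod (v $ y))\<^sup>2))"
    unfolding A_def by (rule mult_left_mono[OF sum_symmetric_neighbourhoods_le[OF sym deg]]) auto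
  also have "\<dots> = (real K * \<delta> * vnorm v)\<^sup>2"
  proof -
    have "(\<Sum>y<d. (cmod (v $ y))\<^sup>2) = (vnorm v)\<^sup>2" using v by (simp add: vnorm_square)
    then show ?thesis by (simp add: power_mult_distrib power2_eq_square)
  qed
  finally show ?thesis
    by (rule power2_le_imp_le) (simp add: assms vnorm_nonneg)
qed

definition mat_list_prod :: "nat \<Rightarrow> complex mat list \<Rightarrow> complex mat" where
  "mat_list_prod D As = foldr (*) As (1\<^sub>m D)"

lemma mat_list_prod_Nil [simp]: "mat_list_prod D [] = 1\<^sub>m D"
  unfolding mat_list_prod_def by simp

lemma mat_list_prod_Cons [simp]: "mat_list_prod D (A # As) = A * mat_list_prod D As"
  unfolding mat_list_prod_def by simp

lemma mat_list_prod_carrier: "set As \<subseteq> carrier_mat D D \<Longrightarrow> mat_list_prod D As \<in> carrier_mat D D"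
  by (induction As) auto

lemma mat_list_prod_append:
  "set As \<subseteq> carrier_mat D D \<Longrightarrow> set Bs \<subseteq> carrier_mat D D \<Longrightarrow>
   mat_list_prod D (As @ Bs) = mat_list_prod D As * mat_list_prod D Bs"
proof (induction As)
  case Nil
  then show ?case using mat_list_prod_carrier[of Bs D] by simp
next
  case (Cons A As)
  have "A \<in> carrier_mat D D" "mat_list_prod D As \<in> carrier_mat D D" "mat_list_prod D Bs \<in> carrier_mat D D"
    using Cons.prems mat_list_prod_carrier by auto
  then show ?case using Cons by (simp add: assoc_mult_mat)
qed

definition near_contraction :: "nat \<Rightarrow> real \<Rightarrow> complex mat \<Rightarrow> complex mat \<Rightarrow> bool" where
  "near_contraction D \<beta> A B \<longleftrightarrow> A \<in> carrier_mat D D \<and> B \<in> carrier_mat D D \<and>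
     (\<forall>v\<in>carrier_vec D. vnorm (A *\<^sub>v v) \<le> vnorm v \<and> vnorm ((A - B) *\<^sub>v v) \<le> \<beta> * vnorm v)"

lemma near_contraction_vnorm_le:
  fixes \<beta> :: real
  assumes "near_contraction D \<beta> A B" "v \<in> carrier_vec D"
  shows "vnorm (B *\<^sub>v v) \<le> (1 + \<beta>) * vnorm v"
proof -
  have A: "A \<in> carrier_mat D D" and B: "B \<in> carrier_mat D D"
    using assms unfolding near_contraction_def by auto
  have "B *\<^sub>v v = A *\<^sub>v v - (A - B) *\<^sub>v v"
    using A B assms(2) by (intro eq_vecI) (auto simp: minus_mult_distrib_mat_vec[OF A B assms(2)])
  then have "vnorm (B *\<^sub>v v) \<le> vnorm (A *\<^sub>v v) + vnorm ((A - B) *\<^sub>v v)"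
    using A B by (simp add: vnorm_diff_le_add)
  also have "\<dots> \<le> vnorm v + \<beta> * vnorm v"
    using assms unfolding near_contraction_def by (intro add_mono) auto
  finally show ?thesis by (simp add: algebra_simps)
qed

lemma list_all2_near_contraction_carrier:
  "list_all2 (near_contraction D \<beta>) As Bs \<Longrightarrow> set As \<subseteq> carrier_mat D D \<and> set Bs \<subseteq> carrier_mat D D"
  by (induction rule: list_all2_induct) (auto simp: near_contraction_def)

lemma vnorm_mat_list_prod_contraction:
  fixes \<beta> :: real
  assumes "list_all2 (near_contraction D \<beta>) As Bs" "v \<in> carrier_vec D"
  shows "vnorm (mat_list_prod D As *\<^sub>v v) \<le> vnorm v"
  using assms
proof (induction As Bs arbitrary: v rule: list_all2_induct)
  case (Cons A As B Bs)
  have P: "mat_list_prod D As \<in> carrier_mat D D"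
    using list_all2_near_contraction_carrier[OF Cons(2)] by (simp add: mat_list_prod_carrier)
  then have "vnorm (A *\<^sub>v (mat_list_prod D As *\<^sub>v v)) \<le> vnorm (mat_list_prod D As *\<^sub>v v)"
    using Cons(1) Cons.prems unfolding near_contraction_def by simp
  also have "\<dots> \<le> vnorm v" using Cons by simp
  finally show ?case using Cons(1) P Cons.prems unfolding near_contraction_def
    by (simp add: assoc_mult_mat_vec[of _ D D _ D])
qed simp

text \<open>Telescoping: replacing the factors one at a time, each replacement costs at most
  \<open>\<beta>(1 + \<beta>)\<^sup>\<ell>\<close> since the factors to its left are \<open>\<beta>\<close>-perturbed contractions.\<close>
lemma vnorm_mat_list_prod_perturbation:
  fixes \<beta> :: real
  assumes "list_all2 (near_contraction D \<beta>) As Bs" "v \<in> carrier_vec D" "\<beta> \<ge> 0"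
  shows "vnorm (mat_list_prod D As *\<^sub>v v - mat_list_prod D Bs *\<^sub>v v)
    \<le> length As * \<beta> * (1 + \<beta>) ^ length As * vnorm v"
  using assms
proof (induction As Bs arbitrary: v rule: list_all2_induct)
  case Nil
  have "vnorm (v - v) = 0" unfolding vnorm_def by simp
  then show ?case using Nil by simp
next
  case (Cons A As B Bs)
  have A: "A \<in> carrier_mat D D" and B: "B \<in> carrier_mat D D"
    using Cons unfolding near_contraction_def by auto
  define w where "w = mat_list_prod D As *\<^sub>v v"
  define u where "u = mat_list_prod D Bs *\<^sub>v v"
  have w: "w \<in> carrier_vec D" and u: "u \<in> carrier_vec D"
    using list_all2_near_contraction_carrier[OF Cons(2)] Cons.prems
    unfolding w_def u_def by (auto intro!: mult_mat_vec_carrier mat_list_prod_carrier)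
  have e: "mat_list_prod D (A # As) *\<^sub>v v = A *\<^sub>v w" "mat_list_prod D (B # Bs) *\<^sub>v v = B *\<^sub>v u"
    using A B Cons.prems list_all2_near_contraction_carrier[OF Cons(2)]
    unfolding w_def u_def by (auto intro!: assoc_mult_mat_vec mat_list_prod_carrier)
  have "vnorm (A *\<^sub>v w - B *\<^sub>v u) \<le> vnorm (A *\<^sub>v w - B *\<^sub>v w) + vnorm (B *\<^sub>v w - B *\<^sub>v u)"
    using A B w u by (intro vnorm_diff_triangle) auto
  also have "A *\<^sub>v w - B *\<^sub>v w = (A - B) *\<^sub>v w" using minus_mult_distrib_mat_vec[OF A B w] by simp
  also have "B *\<^sub>v w - B *\<^sub>v u = B *\<^sub>v (w - u)" using mult_minus_distrib_mat_vec[OF B w u] by simp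
  also have "vnorm ((A - B) *\<^sub>v w) \<le> \<beta> * vnorm w" using Cons(1) w unfolding near_contraction_def by auto
  also have "\<beta> * vnorm w \<le> \<beta> * vnorm v"
    using vnorm_mat_list_prod_contraction[OF Cons(2) Cons.prems(1)] Cons.prems(2)
    unfolding w_def by (intro mult_left_mono) auto
  also have "vnorm (B *\<^sub>v (w - u)) \<le> (1 + \<beta>) * vnorm (w - u)"
    using near_contraction_vnorm_le[OF Cons(1)] w u by auto
  also have "vnorm (w - u) \<le> length As * \<beta> * (1 + \<beta>) ^ length As * vnorm v"
    unfolding w_def u_def by (rule Cons.IH[OF Cons.prems])
  finally have "vnorm (A *\<^sub>v w - B *\<^sub>v u)
      \<le> \<beta> * vnorm v + (1 + \<beta>) * (length As * \<beta> * (1 + \<beta>) ^ length As * vnorm v)"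
    using Cons.prems(2) by (simp add: mult_left_mono)
  also have "\<dots> \<le> length (A # As) * \<beta> * (1 + \<beta>) ^ length (A # As) * vnorm v"
  proof -
    have "\<beta> * 1 * vnorm v \<le> \<beta> * (1 + \<beta>) ^ length (A # As) * vnorm v"
      using Cons.prems(2) vnorm_nonneg[of v] by (intro mult_right_mono mult_left_mono one_le_power) auto
    then show ?thesis by (simp add: algebra_simps)
  qed
  finally show ?case using e by simp
qed

section \<open>Rounding gates to a grid\<close>

lemma gate_on_carrier: "gate_on N Q G \<Longrightarrow> G \<in> carrier_mat (2 ^ N) (2 ^ N)"
  unfolding gate_on_def unitary_mat_def by blast

lemma gate_on_unitary: "gate_on N Q G \<Longrightarrow> unitary_mat (2 ^ N) G"
  unfolding gate_on_def by blast

lemma gate_on_qubits: "gate_on N Q G \<Longrightarrow> Q \<subseteq> {..<N} \<and> Q \<noteq> {} \<and> card Q \<le> 2"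
  unfolding gate_on_def by auto

lemma gate_on_entries:
  assumes "gate_on N Q G"
  obtains g where "\<And>x y. x < 2 ^ N \<Longrightarrow> y < 2 ^ N \<Longrightarrow> G $$ (x, y) =
    (if agree_off N Q x y then g (\<lambda>i. i \<in> Q \<and> bit x i) (\<lambda>i. i \<in> Q \<and> bit y i) else 0)"
  using assms unfolding gate_on_def agree_off_def by blast

lemma gate_on_entry_zero:
  "gate_on N Q G \<Longrightarrow> x < 2 ^ N \<Longrightarrow> y < 2 ^ N \<Longrightarrow> \<not> agree_off N Q x y \<Longrightarrow> G $$ (x, y) = 0"
  by (erule gate_on_entries) simp

text \<open>Rounding down to the lattice \<open>\<delta>(\<int> + i\<int>)\<close>, clipped to \<open>|Re|, |Im| \<le> k\<delta>\<close> so that only the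
  finitely many points of \<open>grid \<delta> k\<close> occur.\<close>
definition grid_round_real :: "real \<Rightarrow> int \<Rightarrow> real \<Rightarrow> real" where
  "grid_round_real \<delta> k r = \<delta> * of_int (max (-k) (min k \<lfloor>r / \<delta>\<rfloor>))"

definition grid_round :: "real \<Rightarrow> int \<Rightarrow> complex \<Rightarrow> complex" where
  "grid_round \<delta> k z = Complex (grid_round_real \<delta> k (Re z)) (grid_round_real \<delta> k (Im z))"

definition grid :: "real \<Rightarrow> int \<Rightarrow> complex set" where
  "grid \<delta> k = (\<lambda>(a, b). Complex (\<delta> * of_int a) (\<delta> * of_int b)) ` ({-k..k} \<times> {-k..k})"

definition grid_round_mat :: "real \<Rightarrow> int \<Rightarrow> complex mat \<Rightarrow> complex mat" where
  "grid_round_mat \<delta> k G = mat (dim_row G) (dim_col G) (\<lambda>ij. grid_round \<delta> k (G $$ ij))"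

lemma grid_round_in_grid: "0 \<le> k \<Longrightarrow> grid_round \<delta> k z \<in> grid \<delta> k"
  unfolding grid_round_def grid_def grid_round_real_def
  by (rule image_eqI[where x="(max (-k) (min k \<lfloor>Re z / \<delta>\<rfloor>), max (-k) (min k \<lfloor>Im z / \<delta>\<rfloor>))"]) auto

lemma grid_round_zero: "0 \<le> k \<Longrightarrow> grid_round \<delta> k 0 = 0"
  unfolding grid_round_def grid_round_real_def by (simp add: complex_eq_iff)

lemma grid_round_real_error:
  assumes d: "\<delta> > 0" and k: "real_of_int k \<ge> 1 / \<delta> + 1" and r: "\<bar>r\<bar> \<le> 1"
  shows "\<bar>r - grid_round_real \<delta> k r\<bar> \<le> \<delta>"
proof -
  have "\<bar>r / \<delta>\<bar> \<le> 1 / \<delta>" using d r by (simp add: abs_divide divide_right_mono)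
  then have "- real_of_int k \<le> r / \<delta> - 1" "r / \<delta> \<le> real_of_int k" using k by linarith+
  then have "-k \<le> \<lfloor>r / \<delta>\<rfloor> \<and> \<lfloor>r / \<delta>\<rfloor> \<le> k" by (simp add: le_floor_iff floor_le_iff)
  then have e: "grid_round_real \<delta> k r = \<delta> * of_int \<lfloor>r / \<delta>\<rfloor>" unfolding grid_round_real_def by simp
  have "\<delta> * of_int \<lfloor>r / \<delta>\<rfloor> \<le> r" using mult_left_mono[OF of_int_floor_le[of "r / \<delta>"], of \<delta>] d by simp
  moreover have "r < \<delta> * of_int \<lfloor>r / \<delta>\<rfloor> + \<delta>"
    using mult_strict_left_mono[OF real_of_int_floor_add_one_gt[of "r / \<delta>"] d] d by (simp add: algebra_simps)
  ultimately show ?thesis unfolding e by simp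
qed

lemma grid_round_error:
  assumes "\<delta> > 0" "real_of_int k \<ge> 1 / \<delta> + 1" "cmod z \<le> 1"
  shows "cmod (z - grid_round \<delta> k z) \<le> 2 * \<delta>"
proof -
  have "\<bar>Re z\<bar> \<le> 1" "\<bar>Im z\<bar> \<le> 1" using assms(3) abs_Re_le_cmod abs_Im_le_cmod order_trans by blast+
  then have "\<bar>Re z - grid_round_real \<delta> k (Re z)\<bar> \<le> \<delta>" "\<bar>Im z - grid_round_real \<delta> k (Im z)\<bar> \<le> \<delta>"
    using grid_round_real_error[OF assms(1,2)] by auto
  then show ?thesis using cmod_le[of "z - grid_round \<delta> k z"] unfolding grid_round_def by simp
qed

lemma finite_grid: "finite (grid \<delta> k)"
  unfolding grid_def by simp

lemma card_grid_le: "card (grid \<delta> k) \<le> nat (2 * k + 1) ^ 2"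
proof -
  have "card (grid \<delta> k) \<le> card ({-k..k} \<times> {-k..k})" unfolding grid_def by (rule card_image_le) simp
  also have "\<dots> = nat (2 * k + 1) ^ 2" by (simp add: card_cartesian_product power2_eq_square)
  finally show ?thesis .
qed

lemma index_grid_round_mat [simp]:
  "i < dim_row G \<Longrightarrow> j < dim_col G \<Longrightarrow> grid_round_mat \<delta> k G $$ (i, j) = grid_round \<delta> k (G $$ (i, j))"
  "dim_row (grid_round_mat \<delta> k G) = dim_row G" "dim_col (grid_round_mat \<delta> k G) = dim_col G"
  unfolding grid_round_mat_def by auto

text \<open>A gate has at most four nonzero entries in each row, each moved by at most \<open>2\<delta>\<close>.\<close>
lemma near_contraction_grid_round_gate:
  assumes g: "gate_on N Q G" and d: "\<delta> > 0" and k: "real_of_int k \<ge> 1 / \<delta> + 1"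
  shows "near_contraction (2 ^ N) (8 * \<delta>) G (grid_round_mat \<delta> k G)"
proof -
  have G: "G \<in> carrier_mat (2 ^ N) (2 ^ N)" by (rule gate_on_carrier[OF g])
  have U: "unitary_mat (2 ^ N) G" by (rule gate_on_unitary[OF g])
  have k0: "0 \<le> k" using k d by (smt (verit) divide_pos_pos of_int_less_0_iff)
  have R: "grid_round_mat \<delta> k G \<in> carrier_mat (2 ^ N) (2 ^ N)" using G by auto
  have ent: "(G - grid_round_mat \<delta> k G) $$ (x, y) = G $$ (x, y) - grid_round \<delta> k (G $$ (x, y))"
    if "x < 2 ^ N" "y < 2 ^ N" for x y
    using that G R by simp
  have "vnorm ((G - grid_round_mat \<delta> k G) *\<^sub>v v) \<le> real 4 * (2 * \<delta>) * vnorm v"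
    if v: "v \<in> carrier_vec (2 ^ N)" for v
  proof (rule vnorm_mult_sparse_le[where R = "agree_off N Q"])
    show "G - grid_round_mat \<delta> k G \<in> carrier_mat (2 ^ N) (2 ^ N)" using R by (rule minus_carrier_mat)
    fix x y :: nat assume x: "x < 2 ^ N" and y: "y < 2 ^ N"
    show "\<not> agree_off N Q x y \<Longrightarrow> (G - grid_round_mat \<delta> k G) $$ (x, y) = 0"
      using ent[OF x y] gate_on_entry_zero[OF g x y] grid_round_zero[OF k0] by simp
    show "cmod ((G - grid_round_mat \<delta> k G) $$ (x, y)) \<le> 2 * \<delta>"
      unfolding ent[OF x y] by (rule grid_round_error[OF d k unitary_mat_entry_norm_le[OF U x y]])
  next
    fix x :: nat
    have "card {y. y < 2 ^ N \<and> agree_off N Q x y} \<le> 2 ^ card Q"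
      using gate_on_qubits[OF g] by (intro card_agree_off_le) auto
    also have "(2::nat) ^ card Q \<le> 2 ^ 2" using gate_on_qubits[OF g] by (intro power_increasing) auto
    finally show "card {y. y < 2 ^ N \<and> agree_off N Q x y} \<le> 4" by simp
  next
    fix x y assume "agree_off N Q x y"
    then show "agree_off N Q y x" by (rule agree_off_sym)
  qed (use v d in auto)
  then show ?thesis
    unfolding near_contraction_def using G R unitary_mat_vnorm[OF U] by simp
qed

text \<open>A gate on qubits \<open>{a, b}\<close> is determined by its \<open>4 \<times> 4\<close> block, indexed by the bits
  at \<open>a\<close> and \<open>b\<close> of row and column (\<open>a = b\<close> covers one-qubit gates).\<close>
definition grid_gate :: "nat \<Rightarrow> nat \<Rightarrow> nat \<Rightarrow> ((bool \<times> bool) \<times> (bool \<times> bool) \<Rightarrow> complex) \<Rightarrow> complex mat" where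
  "grid_gate N a b h = mat (2 ^ N) (2 ^ N) (\<lambda>(x, y).
     if agree_off N {a, b} x y then h ((bit x a, bit x b), (bit y a, bit y b)) else 0)"

definition grid_gates :: "nat \<Rightarrow> real \<Rightarrow> int \<Rightarrow> complex mat set" where
  "grid_gates N \<delta> k = (\<lambda>(a, b, h). grid_gate N a b h) ` ({..<N} \<times> {..<N} \<times> PiE UNIV (\<lambda>_. grid \<delta> k))"

lemma grid_round_gate_in_grid_gates:
  assumes g: "gate_on N Q G" and k0: "0 \<le> k"
  shows "grid_round_mat \<delta> k G \<in> grid_gates N \<delta> k"
proof -
  obtain a b where ab: "Q = {a, b}"
    using g unfolding gate_on_def by (metis card_1_singletonE card_2_iff insert_absorb2)
  have abN: "a < N" "b < N" using gate_on_qubits[OF g] ab by auto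
  obtain g0 where g0: "\<And>x y. x < 2 ^ N \<Longrightarrow> y < 2 ^ N \<Longrightarrow> G $$ (x, y) =
    (if agree_off N Q x y then g0 (\<lambda>i. i \<in> Q \<and> bit x i) (\<lambda>i. i \<in> Q \<and> bit y i) else 0)"
    using gate_on_entries[OF g] by blast
  define h where "h = (\<lambda>((p1, p2), (q1, q2)). grid_round \<delta> k
    (g0 (\<lambda>i. (i = a \<and> p1) \<or> (i = b \<and> p2)) (\<lambda>i. (i = a \<and> q1) \<or> (i = b \<and> q2))))"
  have G: "G \<in> carrier_mat (2 ^ N) (2 ^ N)" by (rule gate_on_carrier[OF g])
  have bits: "(\<lambda>i. (i = a \<or> i = b) \<and> bit x i) = (\<lambda>i. (i = a \<and> bit x a) \<or> (i = b \<and> bit x b))" for x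
    by auto
  have "grid_round_mat \<delta> k G = grid_gate N a b h"
  proof (rule eq_matI)
    fix x y assume "x < dim_row (grid_gate N a b h)" "y < dim_col (grid_gate N a b h)"
    then have x: "x < 2 ^ N" and y: "y < 2 ^ N" by (auto simp: grid_gate_def)
    show "grid_round_mat \<delta> k G $$ (x, y) = grid_gate N a b h $$ (x, y)"
      using G x y by (simp add: g0 grid_gate_def h_def bits ab grid_round_zero[OF k0])
  qed (use G in \<open>auto simp: grid_gate_def\<close>)
  moreover have "h \<in> PiE UNIV (\<lambda>_. grid \<delta> k)"
    unfolding h_def using grid_round_in_grid[OF k0] by (auto split: prod.splits)
  ultimately show ?thesis unfolding grid_gates_def using abN by force
qed

lemma finite_grid_gates: "finite (grid_gates N \<delta> k)"
  unfolding grid_gates_def by (intro finite_imageI finite_cartesian_product finite_PiE finite_grid) auto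

lemma card_grid_gates_le: "card (grid_gates N \<delta> k) \<le> N * N * card (grid \<delta> k) ^ 16"
proof -
  have c16: "card (UNIV :: ((bool \<times> bool) \<times> (bool \<times> bool)) set) = 16"
    by (simp add: UNIV_Times_UNIV[symmetric] card_cartesian_product del: UNIV_Times_UNIV)
  have "card (grid_gates N \<delta> k)
      \<le> card ({..<N} \<times> {..<N} \<times> PiE (UNIV :: ((bool \<times> bool) \<times> (bool \<times> bool)) set) (\<lambda>_. grid \<delta> k))"
    unfolding grid_gates_def by (rule card_image_le) (intro finite_cartesian_product finite_PiE finite_grid; simp)
  also have "\<dots> = N * N * card (grid \<delta> k) ^ 16"
    by (simp add: card_cartesian_product card_PiE c16)
  finally show ?thesis .
qed

lemma card_lists_length_le_power:
  assumes "finite A"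
  shows "finite {xs. length xs \<le> k \<and> set xs \<subseteq> A} \<and> card {xs. length xs \<le> k \<and> set xs \<subseteq> A} \<le> (card A + 1) ^ k"
proof -
  have "(\<Sum>i\<le>k. a ^ i) \<le> (a + 1) ^ k" for a :: nat
  proof (induction k)
    case (Suc k)
    have "a * a ^ k \<le> a * (a + 1) ^ k" by (intro mult_le_mono2 power_mono) auto
    moreover have "(a + 1) ^ Suc k = (a + 1) ^ k + a * (a + 1) ^ k" by (simp add: algebra_simps)
    moreover have "(\<Sum>i\<le>Suc k. a ^ i) = (\<Sum>i\<le>k. a ^ i) + a * a ^ k" by simp
    ultimately show ?case using Suc.IH by linarith
  qed simp
  moreover have "{xs. length xs \<le> k \<and> set xs \<subseteq> A} = {xs. set xs \<subseteq> A \<and> length xs \<le> k}" by blast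
  ultimately show ?thesis using finite_lists_length_le[OF assms] card_lists_length_le[OF assms] by simp
qed

section \<open>Circuits as products of gates\<close>

text \<open>The gates of a circuit in the order of the matrix product: last layer first.\<close>
definition gate_seq :: "'a list list \<Rightarrow> 'a list" where
  "gate_seq C = concat (rev C)"

definition grid_round_circuit :: "real \<Rightarrow> int \<Rightarrow> (nat set \<times> complex mat) list list \<Rightarrow> complex mat list list" where
  "grid_round_circuit \<delta> k C = map (map (\<lambda>(Q, G). grid_round_mat \<delta> k G)) C"

lemma layer_op_eq_mat_list_prod: "layer_op N L = mat_list_prod (2 ^ N) (map snd L)"
  by (induction L) (auto simp: layer_op_def)

lemma is_layer_gate_on: "is_layer N L \<Longrightarrow> (Q, G) \<in> set L \<Longrightarrow> gate_on N Q G"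
  unfolding is_layer_def by blast

lemma gate_seq_gate_on: "is_circuit N C \<Longrightarrow> (Q, G) \<in> set (gate_seq C) \<Longrightarrow> gate_on N Q G"
  unfolding is_circuit_def gate_seq_def using is_layer_gate_on by fastforce

lemma gate_seq_carrier: "is_circuit N C \<Longrightarrow> set (map snd (gate_seq C)) \<subseteq> carrier_mat (2 ^ N) (2 ^ N)"
  using gate_seq_gate_on gate_on_carrier by fastforce

lemma circuit_op_eq_mat_list_prod:
  "is_circuit N C \<Longrightarrow> circuit_op N C = mat_list_prod (2 ^ N) (map snd (gate_seq C))"
proof (induction C rule: rev_induct)
  case Nil
  then show ?case by (simp add: circuit_op_def gate_seq_def)
next
  case (snoc L C)
  have C: "is_circuit N C" and L: "is_layer N L" using snoc.prems unfolding is_circuit_def by auto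
  have "set (map snd L) \<subseteq> carrier_mat (2 ^ N) (2 ^ N)"
    using L is_layer_gate_on gate_on_carrier by fastforce
  then have "mat_list_prod (2 ^ N) (map snd L) * mat_list_prod (2 ^ N) (map snd (gate_seq C))
      = mat_list_prod (2 ^ N) (map snd (gate_seq (C @ [L])))"
    using mat_list_prod_append[OF _ gate_seq_carrier[OF C]] by (simp add: gate_seq_def)
  then show ?case using snoc.IH[OF C] by (simp add: circuit_op_def layer_op_eq_mat_list_prod)
qed

lemma circuit_op_carrier: "is_circuit N C \<Longrightarrow> circuit_op N C \<in> carrier_mat (2 ^ N) (2 ^ N)"
  using circuit_op_eq_mat_list_prod mat_list_prod_carrier gate_seq_carrier by metis

lemma vnorm_circuit_op:
  assumes C: "is_circuit N C" and w: "w \<in> carrier_vec (2 ^ N)"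
  shows "vnorm (circuit_op N C *\<^sub>v w) = vnorm w"
proof -
  have "vnorm (mat_list_prod (2 ^ N) (map snd gs) *\<^sub>v w) = vnorm w"
    if "\<forall>g\<in>set gs. gate_on N (fst g) (snd g)" "w \<in> carrier_vec (2 ^ N)" for gs w
    using that
  proof (induction gs arbitrary: w)
    case (Cons g gs)
    have P: "mat_list_prod (2 ^ N) (map snd gs) \<in> carrier_mat (2 ^ N) (2 ^ N)"
      using Cons.prems gate_on_carrier by (intro mat_list_prod_carrier) auto
    have "vnorm (snd g *\<^sub>v (mat_list_prod (2 ^ N) (map snd gs) *\<^sub>v w))
        = vnorm (mat_list_prod (2 ^ N) (map snd gs) *\<^sub>v w)"
      using unitary_mat_vnorm[OF gate_on_unitary[of N "fst g" "snd g"]] P Cons.prems by auto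
    also have "\<dots> = vnorm w" using Cons by simp
    finally have "vnorm (snd g *\<^sub>v (mat_list_prod (2 ^ N) (map snd gs) *\<^sub>v w)) = vnorm w" .
    moreover have "snd g \<in> carrier_mat (2 ^ N) (2 ^ N)" using gate_on_carrier[of N "fst g" "snd g"] Cons.prems(1) by simp
    ultimately show ?case using P Cons.prems(2) by (simp add: assoc_mult_mat_vec[of _ "2 ^ N" "2 ^ N"])
  qed simp
  then show ?thesis unfolding circuit_op_eq_mat_list_prod[OF C] using gate_seq_gate_on[OF C] w by simp
qed

lemma gate_seq_grid_round_circuit:
  "gate_seq (grid_round_circuit \<delta> k C) = map (\<lambda>(Q, G). grid_round_mat \<delta> k G) (gate_seq C)"
  unfolding grid_round_circuit_def gate_seq_def by (simp add: rev_map map_concat)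

lemma grid_round_circuit_carrier:
  assumes "is_circuit N C"
  shows "set (gate_seq (grid_round_circuit \<delta> k C)) \<subseteq> carrier_mat (2 ^ N) (2 ^ N)"
proof
  fix A assume "A \<in> set (gate_seq (grid_round_circuit \<delta> k C))"
  then obtain Q G where QG: "(Q, G) \<in> set (gate_seq C)" and A: "A = grid_round_mat \<delta> k G"
    unfolding gate_seq_grid_round_circuit by auto
  have "G \<in> carrier_mat (2 ^ N) (2 ^ N)" by (rule gate_on_carrier[OF gate_seq_gate_on[OF assms QG]])
  then show "A \<in> carrier_mat (2 ^ N) (2 ^ N)" unfolding A carrier_mat_def by simp
qed

lemma length_layer_le:
  assumes "is_layer N L"
  shows "length L \<le> N"
proof -
  have gates: "gate_on N (fst (L ! i)) (snd (L ! i))" if "i < length L" for i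
    using assms is_layer_gate_on[of N L] nth_mem[OF that] by (metis prod.collapse)
  have fin: "finite (fst (L ! i))" if "i < length L" for i
    using gate_on_qubits[OF gates[OF that]] finite_subset by blast
  have mem: "Min (fst (L ! i)) \<in> fst (L ! i)" if "i < length L" for i
    using gate_on_qubits[OF gates[OF that]] fin[OF that] by (intro Min_in) auto
  have "inj_on (\<lambda>i. Min (fst (L ! i))) {..<length L}"
    using assms mem unfolding is_layer_def inj_on_def by (metis disjoint_iff lessThan_iff)
  moreover have "(\<lambda>i. Min (fst (L ! i))) ` {..<length L} \<subseteq> {..<N}"
    using mem gate_on_qubits[OF gates] by blast
  ultimately have "card {..<length L} \<le> card {..<N}" by (intro card_inj_on_le) auto
  then show ?thesis by simp
qed

lemma length_gate_seq_le: "is_circuit N C \<Longrightarrow> length (gate_seq C) \<le> N * depth C"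
proof (induction C)
  case (Cons L C)
  then have "length L \<le> N" "length (gate_seq C) \<le> N * depth C"
    by (auto simp: is_circuit_def intro: length_layer_le)
  then show ?case by (simp add: gate_seq_def depth_def)
qed (simp add: gate_seq_def depth_def)

lemma vnorm_circuit_op_grid_round_diff_le:
  assumes C: "is_circuit N C" and d: "\<delta> > 0" and k: "real_of_int k \<ge> 1 / \<delta> + 1"
    and e: "e \<in> carrier_vec (2 ^ N)" "vnorm e = 1"
  shows "vnorm (circuit_op N C *\<^sub>v e - mat_list_prod (2 ^ N) (gate_seq (grid_round_circuit \<delta> k C)) *\<^sub>v e)
     \<le> real (length (gate_seq C)) * (8 * \<delta>) * (1 + 8 * \<delta>) ^ length (gate_seq C)"
proof -
  have "list_all2 (near_contraction (2 ^ N) (8 * \<delta>))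
     (map snd (gate_seq C)) (map (\<lambda>(Q, G). grid_round_mat \<delta> k G) (gate_seq C))"
    unfolding list.rel_map
  proof (rule list.rel_refl_strong)
    fix g assume "g \<in> set (gate_seq C)"
    then have "gate_on N (fst g) (snd g)" using gate_seq_gate_on[OF C] by simp
    then show "near_contraction (2 ^ N) (8 * \<delta>) (snd g) (case g of (Q, G) \<Rightarrow> grid_round_mat \<delta> k G)"
      using near_contraction_grid_round_gate[OF _ d k] by (simp add: case_prod_beta)
  qed
  from vnorm_mat_list_prod_perturbation[OF this e(1)] d e(2) show ?thesis
    by (simp add: circuit_op_eq_mat_list_prod[OF C] gate_seq_grid_round_circuit)
qed

definition grid_circuits :: "nat \<Rightarrow> real \<Rightarrow> int \<Rightarrow> nat \<Rightarrow> complex mat list list set" where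
  "grid_circuits N \<delta> k D = {ls. length ls \<le> D \<and> set ls \<subseteq> {l. length l \<le> N \<and> set l \<subseteq> grid_gates N \<delta> k}}"

lemma grid_round_circuit_mem:
  assumes C: "is_circuit N C" and "depth C \<le> D" and k0: "0 \<le> k"
  shows "grid_round_circuit \<delta> k C \<in> grid_circuits N \<delta> k D"
proof -
  have "length (map (\<lambda>(Q, G). grid_round_mat \<delta> k G) L) \<le> N \<and>
    set (map (\<lambda>(Q, G). grid_round_mat \<delta> k G) L) \<subseteq> grid_gates N \<delta> k" if "L \<in> set C" for L
  proof -
    have L: "is_layer N L" using C that unfolding is_circuit_def by auto
    show ?thesis using length_layer_le[OF L] grid_round_gate_in_grid_gates[OF is_layer_gate_on[OF L] k0]
      by auto
  qed
  then show ?thesis using assms(2) unfolding grid_round_circuit_def grid_circuits_def depth_def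
    by (simp add: image_subset_iff)
qed

section \<open>Counting approximating circuits up to rounding\<close>

lemma approximates_is_circuit: "approximates n m eps C M \<Longrightarrow> is_circuit (n + m) C"
  unfolding approximates_def by blast

lemma approximates_output_close:
  assumes ap: "approximates n m eps C M" and M: "M \<in> carrier_mat n n" and v: "v \<in> carrier_vec n"
  shows "vnorm (circuit_op (n + m) C *\<^sub>v unit_vec (2 ^ (n + m)) (bidx v)
    - unit_vec (2 ^ (n + m)) (bidx (M *\<^sub>v v))) < eps"
proof -
  obtain \<phi> where phi: "\<phi> \<in> carrier_vec (2 ^ n)"
    and eq: "circuit_op (n + m) C *\<^sub>v unit_vec (2 ^ (n + m)) (bidx v)
      = vec (2 ^ (n + m)) (\<lambda>j. if j < 2 ^ n then \<phi> $ j else 0)"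
    and lt: "vnorm (\<phi> - unit_vec (2 ^ n) (bidx (M *\<^sub>v v))) < eps"
    using ap v unfolding approximates_def by blast
  define y where "y = bidx (M *\<^sub>v v)"
  have y: "y < 2 ^ n" unfolding y_def using M by (intro bidx_less) simp
  have nN: "(2::nat) ^ n \<le> 2 ^ (n + m)" by (simp add: power_increasing)
  define w where "w = vec (2 ^ (n + m)) (\<lambda>j. if j < 2 ^ n then \<phi> $ j else 0) - unit_vec (2 ^ (n + m)) y"
  have "(\<Sum>i<2 ^ (n + m). (cmod (w $ i))\<^sup>2) = (\<Sum>i<2 ^ n. (cmod (w $ i))\<^sup>2)"
    by (rule sum.mono_neutral_right) (use nN y in \<open>auto simp: w_def\<close>)
  also have "\<dots> = (\<Sum>i<2 ^ n. (cmod ((\<phi> - unit_vec (2 ^ n) y) $ i))\<^sup>2)"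
  proof (intro sum.cong refl)
    fix i :: nat assume "i \<in> {..<2 ^ n}"
    then have "i < 2 ^ n" by simp
    moreover from this nN have "i < 2 ^ (n + m)" by (rule less_le_trans)
    ultimately show "(cmod (w $ i))\<^sup>2 = (cmod ((\<phi> - unit_vec (2 ^ n) y) $ i))\<^sup>2"
      using phi y by (simp add: w_def unit_vec_def)
  qed
  finally have "vnorm w = vnorm (\<phi> - unit_vec (2 ^ n) y)" unfolding vnorm_def using phi by (simp add: w_def)
  then show ?thesis using eq lt unfolding y_def w_def by simp
qed

text \<open>Outputs of distinct \<open>M\<close> and \<open>M'\<close> are orthogonal basis vectors, at distance \<open>\<surd>2\<close>.\<close>
lemma approximates_unique:
  assumes ap: "approximates n m eps C M" and ap': "approximates n m eps C' M'"
    and M: "M \<in> carrier_mat n n" and M': "M' \<in> carrier_mat n n"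
    and close: "\<And>x. x < 2 ^ (n + m) \<Longrightarrow>
      vnorm (circuit_op (n + m) C *\<^sub>v unit_vec (2 ^ (n + m)) x - circuit_op (n + m) C' *\<^sub>v unit_vec (2 ^ (n + m)) x) \<le> \<theta>"
    and s: "2 * eps + \<theta> \<le> sqrt 2"
  shows "M = M'"
proof (rule eq_mat_if_mult_vec_eq[OF M M'])
  fix v :: "bit vec" assume v: "v \<in> carrier_vec n"
  have nN: "(2::nat) ^ n \<le> 2 ^ (n + m)" by (simp add: power_increasing)
  have bidx_less_N: "bidx w < 2 ^ (n + m)" if "dim_vec w = n" for w
    using less_le_trans[OF bidx_less[OF that] nN] .
  define e :: "complex vec" where "e = unit_vec (2 ^ (n + m)) (bidx v)"
  define Ue where "Ue = circuit_op (n + m) C *\<^sub>v e"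
  define U'e where "U'e = circuit_op (n + m) C' *\<^sub>v e"
  define u :: "complex vec" where "u = unit_vec (2 ^ (n + m)) (bidx (M *\<^sub>v v))"
  define u' :: "complex vec" where "u' = unit_vec (2 ^ (n + m)) (bidx (M' *\<^sub>v v))"
  have dims: "dim_vec Ue = 2 ^ (n + m)" "dim_vec U'e = 2 ^ (n + m)" "dim_vec u = 2 ^ (n + m)" "dim_vec u' = 2 ^ (n + m)"
    using circuit_op_carrier[OF approximates_is_circuit[OF ap]] circuit_op_carrier[OF approximates_is_circuit[OF ap']]
    unfolding Ue_def U'e_def u_def u'_def by auto
  have "vnorm (u - u') \<le> vnorm (u - Ue) + vnorm (Ue - u')"
    by (rule vnorm_diff_triangle) (simp_all add: dims)
  also have "vnorm (Ue - u') \<le> vnorm (Ue - U'e) + vnorm (U'e - u')"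
    by (rule vnorm_diff_triangle) (simp_all add: dims)
  also have "vnorm (u - Ue) = vnorm (Ue - u)" by (rule vnorm_minus_commute) (simp add: dims)
  moreover have "vnorm (Ue - u) < eps" "vnorm (U'e - u') < eps" "vnorm (Ue - U'e) \<le> \<theta>"
    using approximates_output_close[OF ap M v] approximates_output_close[OF ap' M' v]
      close[OF bidx_less_N] v
    unfolding Ue_def U'e_def e_def u_def u'_def by auto
  ultimately have "vnorm (u - u') < sqrt 2" using s by linarith
  then have "bidx (M *\<^sub>v v) = bidx (M' *\<^sub>v v)"
    using vnorm_unit_vec_diff[OF bidx_less_N bidx_less_N] M M' unfolding u_def u'_def by force
  then show "M *\<^sub>v v = M' *\<^sub>v v" using M M' by (intro bidx_inj) auto
qed

lemma vnorm_circuit_op_diff_le_if_grid_round_eq: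
  assumes C: "is_circuit N C" and C': "is_circuit N C'"
    and eq: "grid_round_circuit \<delta> k C = grid_round_circuit \<delta> k C'"
    and d: "\<delta> > 0" and k: "real_of_int k \<ge> 1 / \<delta> + 1"
    and e: "e \<in> carrier_vec (2 ^ N)" "vnorm e = 1"
    and err: "real (length (gate_seq C)) * (8 * \<delta>) * (1 + 8 * \<delta>) ^ length (gate_seq C) \<le> \<eta>"
      "real (length (gate_seq C')) * (8 * \<delta>) * (1 + 8 * \<delta>) ^ length (gate_seq C') \<le> \<eta>"
  shows "vnorm (circuit_op N C *\<^sub>v e - circuit_op N C' *\<^sub>v e) \<le> 2 * \<eta>"
proof -
  define V where "V = mat_list_prod (2 ^ N) (gate_seq (grid_round_circuit \<delta> k C))"
  have V: "V \<in> carrier_mat (2 ^ N) (2 ^ N)"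
    unfolding V_def by (rule mat_list_prod_carrier[OF grid_round_circuit_carrier[OF C]])
  have "vnorm (circuit_op N C *\<^sub>v e - circuit_op N C' *\<^sub>v e)
      \<le> vnorm (circuit_op N C *\<^sub>v e - V *\<^sub>v e) + vnorm (V *\<^sub>v e - circuit_op N C' *\<^sub>v e)"
    using V circuit_op_carrier[OF C] circuit_op_carrier[OF C'] by (intro vnorm_diff_triangle) auto
  also have "vnorm (V *\<^sub>v e - circuit_op N C' *\<^sub>v e) = vnorm (circuit_op N C' *\<^sub>v e - V *\<^sub>v e)"
    using V circuit_op_carrier[OF C'] by (intro vnorm_minus_commute) auto
  finally show ?thesis
    using vnorm_circuit_op_grid_round_diff_le[OF C d k e] vnorm_circuit_op_grid_round_diff_le[OF C' d k e] err
    unfolding V_def eq by linarith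
qed

lemma card_grid_circuits_le:
  "finite (grid_circuits N \<delta> k D) \<and> card (grid_circuits N \<delta> k D) \<le> ((card (grid_gates N \<delta> k) + 1) ^ N + 1) ^ D"
proof -
  let ?L = "{l. length l \<le> N \<and> set l \<subseteq> grid_gates N \<delta> k}"
  have L: "finite ?L \<and> card ?L \<le> (card (grid_gates N \<delta> k) + 1) ^ N"
    by (rule card_lists_length_le_power[OF finite_grid_gates])
  then have "finite (grid_circuits N \<delta> k D) \<and> card (grid_circuits N \<delta> k D) \<le> (card ?L + 1) ^ D"
    using card_lists_length_le_power[of ?L D] unfolding grid_circuits_def by blast
  moreover have "(card ?L + 1) ^ D \<le> ((card (grid_gates N \<delta> k) + 1) ^ N + 1) ^ D"
    using L by (intro power_mono) auto
  ultimately show ?thesis by linarith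
qed

lemma card_approximable_le_grid_circuits:
  fixes eps \<delta> \<eta> :: real
  assumes B: "B \<subseteq> carrier_mat n n"
    and approx: "\<And>M. M \<in> B \<Longrightarrow> \<exists>C. approximates n m eps C M \<and> depth C \<le> D"
    and d: "\<delta> > 0" and k: "real_of_int k \<ge> 1 / \<delta> + 1"
    and err: "\<And>s. s \<le> (n + m) * D \<Longrightarrow> real s * (8 * \<delta>) * (1 + 8 * \<delta>) ^ s \<le> \<eta>"
    and s: "2 * eps + 2 * \<eta> \<le> sqrt 2"
  shows "card B \<le> ((card (grid_gates (n + m) \<delta> k) + 1) ^ (n + m) + 1) ^ D"
proof -
  have k0: "0 \<le> k" using k d by (smt (verit) divide_pos_pos of_int_less_0_iff)
  have "\<forall>M\<in>B. \<exists>C. approximates n m eps C M \<and> depth C \<le> D" using approx by blast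
  from bchoice[OF this] obtain Cof
    where Cof: "\<And>M. M \<in> B \<Longrightarrow> approximates n m eps (Cof M) M \<and> depth (Cof M) \<le> D" by blast
  have circ: "is_circuit (n + m) (Cof M)" if "M \<in> B" for M
    using approximates_is_circuit Cof[OF that] by blast
  have err_M: "real (length (gate_seq (Cof M))) * (8 * \<delta>) * (1 + 8 * \<delta>) ^ length (gate_seq (Cof M)) \<le> \<eta>"
    if M: "M \<in> B" for M
  proof (rule err)
    have "length (gate_seq (Cof M)) \<le> (n + m) * depth (Cof M)" by (rule length_gate_seq_le[OF circ[OF M]])
    also have "\<dots> \<le> (n + m) * D" using Cof[OF M] by simp
    finally show "length (gate_seq (Cof M)) \<le> (n + m) * D" .
  qed
  have "inj_on (\<lambda>M. grid_round_circuit \<delta> k (Cof M)) B"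
  proof (rule inj_onI)
    fix M M' assume M: "M \<in> B" and M': "M' \<in> B"
      and eq: "grid_round_circuit \<delta> k (Cof M) = grid_round_circuit \<delta> k (Cof M')"
    show "M = M'"
    proof (rule approximates_unique[OF Cof[OF M, THEN conjunct1] Cof[OF M', THEN conjunct1]])
      fix x :: nat assume "x < 2 ^ (n + m)"
      then show "vnorm (circuit_op (n + m) (Cof M) *\<^sub>v unit_vec (2 ^ (n + m)) x
          - circuit_op (n + m) (Cof M') *\<^sub>v unit_vec (2 ^ (n + m)) x) \<le> 2 * \<eta>"
        using vnorm_unit_vec[of x "2 ^ (n + m)"]
        by (intro vnorm_circuit_op_diff_le_if_grid_round_eq[OF circ[OF M] circ[OF M'] eq d k _ _ err_M[OF M] err_M[OF M']])
          simp_all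
    qed (use B M M' s in auto)
  qed
  moreover have "(\<lambda>M. grid_round_circuit \<delta> k (Cof M)) ` B \<subseteq> grid_circuits (n + m) \<delta> k D"
    using grid_round_circuit_mem[OF circ _ k0] Cof by blast
  ultimately show ?thesis using card_inj_on_le card_grid_circuits_le by (metis le_trans)
qed

lemma telescoping_error_le:
  fixes x t :: real
  assumes "0 \<le> x" "real s * x \<le> t" "t \<le> 1"
  shows "real s * x * (1 + x) ^ s \<le> 3 * t"
proof -
  have "(1 + x) ^ s \<le> exp x ^ s" using assms(1) by (intro power_mono) (auto simp: add.commute exp_ge_add_one_self)
  also have "\<dots> = exp (real s * x)" by (simp add: exp_of_nat_mult)
  also have "\<dots> \<le> exp 1" using assms(2,3) by simp
  also have "\<dots> \<le> 3" by (rule exp_le)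
  finally have "(1 + x) ^ s \<le> 3" .
  moreover have "0 \<le> real s * x" using assms(1) by simp
  moreover from this have "0 \<le> t" using assms(2) by linarith
  ultimately have "real s * x * (1 + x) ^ s \<le> t * 3" using assms by (intro mult_mono) auto
  then show ?thesis by simp
qed

lemma power_plus_one_le_double_power: "(a::nat) \<ge> 1 \<Longrightarrow> N \<ge> 1 \<Longrightarrow> a ^ N + 1 \<le> (2 * a) ^ N"
proof -
  assume a: "a \<ge> 1" and N: "N \<ge> 1"
  have "a ^ N + 1 \<le> 2 * a ^ N" using a by simp
  also have "\<dots> \<le> 2 ^ N * a ^ N" using N by (intro mult_right_mono) (simp_all add: self_le_power)
  finally show ?thesis by (simp add: power_mult_distrib)
qed

lemma card_grid_circuits_bound:
  assumes N: "N \<ge> 1" and k0: "0 \<le> k"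
  shows "((card (grid_gates N \<delta> k) + 1) ^ N + 1) ^ D \<le> (4 * (N * N * nat (2 * k + 1) ^ 32)) ^ (N * D)"
proof -
  define R where "R = card (grid_gates N \<delta> k)"
  define g where "g = nat (2 * k + 1) ^ 32"
  have "card (grid \<delta> k) ^ 16 \<le> (nat (2 * k + 1) ^ 2) ^ 16" by (rule power_mono[OF card_grid_le]) simp
  then have "card (grid \<delta> k) ^ 16 \<le> g" unfolding g_def by (simp flip: power_mult)
  then have R: "R \<le> N * N * g" unfolding R_def using card_grid_gates_le[of N \<delta> k] by (meson le_trans mult_le_mono2)
  have "1 \<le> N * N * g" using N k0 unfolding g_def by simp
  moreover have "\<And>X::nat. R \<le> X \<Longrightarrow> 1 \<le> X \<Longrightarrow> 2 * (R + 1) \<le> 4 * X" by presburger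
  ultimately have "2 * (R + 1) \<le> 4 * (N * N * g)" using R by blast
  moreover have "(R + 1) ^ N + 1 \<le> (2 * (R + 1)) ^ N" using N by (intro power_plus_one_le_double_power) auto
  ultimately have "(R + 1) ^ N + 1 \<le> (4 * (N * N * g)) ^ N"
    using power_mono[of "2 * (R + 1)" "4 * (N * N * g)" N] by linarith
  then have "((R + 1) ^ N + 1) ^ D \<le> ((4 * (N * N * g)) ^ N) ^ D" by (rule power_mono) simp
  then show ?thesis unfolding R_def g_def by (simp add: power_mult)
qed

lemma grid_count_base_le:
  fixes t :: real
  assumes t: "0 < t" "t \<le> 1" and n: "4 \<le> real n ^ 2" "n \<le> N"
    and k: "real_of_int k \<le> 8 * real n ^ 2 / t + 2" and k0: "0 \<le> k"
  shows "4 * real N ^ 2 * real (nat (2 * k + 1)) ^ 32 \<le> 4 * (21 / t) ^ 32 * real N ^ 66"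
proof -
  have "5 \<le> 5 * real n ^ 2 / t" using t n by (simp add: le_divide_eq)
  then have "real_of_int (2 * k + 1) \<le> 21 / t * real n ^ 2" using k by (simp add: field_simps)
  then have "real (nat (2 * k + 1)) ^ 32 \<le> (21 / t * real n ^ 2) ^ 32"
    using k0 by (intro power_mono) auto
  also have "\<dots> = (21 / t) ^ 32 * real n ^ 64"
    unfolding power_mult_distrib power_mult[symmetric] by simp
  also have "\<dots> \<le> (21 / t) ^ 32 * real N ^ 64"
    using t n by (intro mult_left_mono power_mono) auto
  finally have "4 * real N ^ 2 * real (nat (2 * k + 1)) ^ 32 \<le> 4 * real N ^ 2 * ((21 / t) ^ 32 * real N ^ 64)"
    by (intro mult_left_mono) auto
  also have "\<dots> = 4 * (21 / t) ^ 32 * real N ^ 66"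
    by (simp add: mult_ac flip: power_add)
  finally show ?thesis .
qed

text \<open>Rounding to the grid of mesh \<open>\<delta> = t / (8n\<^sup>2)\<close> moves a circuit with at most
  \<open>n\<^sup>2\<close> gates by at most \<open>3t\<close>; a two-qubit grid gate is then one of at most
  \<open>N\<^sup>2 (21n\<^sup>2/t)\<^sup>3\<^sup>2\<close> matrices.\<close>
lemma card_approximable_le:
  fixes eps t :: real
  assumes t: "0 < t" "t \<le> 1" and es: "2 * eps + 6 * t \<le> sqrt 2"
    and n: "n \<ge> 2" and ND: "(n + m) * D \<le> n\<^sup>2"
    and B: "B \<subseteq> carrier_mat n n"
    and approx: "\<And>M. M \<in> B \<Longrightarrow> \<exists>C. approximates n m eps C M \<and> depth C \<le> D"
  shows "real (card B) \<le> (4 * (21 / t) ^ 32 * real (n + m) ^ 66) ^ ((n + m) * D)"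
proof -
  define N where "N = n + m"
  define \<delta> where "\<delta> = t / (8 * real n ^ 2)"
  define k where "k = \<lceil>1 / \<delta>\<rceil> + 1"
  have "(2::real) ^ 2 \<le> real n ^ 2" using n by (intro power_mono) auto
  then have n2: "real n ^ 2 \<ge> 4" by simp
  have d: "\<delta> > 0" unfolding \<delta>_def using t n by simp
  have k: "real_of_int k \<ge> 1 / \<delta> + 1" unfolding k_def by linarith
  have k0: "0 \<le> k" using k d by (smt (verit) divide_pos_pos of_int_less_0_iff)
  have "real s * (8 * \<delta>) * (1 + 8 * \<delta>) ^ s \<le> 3 * t" if "s \<le> (n + m) * D" for s
  proof (rule telescoping_error_le)
    have "s \<le> n ^ 2" using that ND by linarith
    then have "real s \<le> real n ^ 2" by (metis of_nat_le_iff of_nat_power)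
    then have "t * real s \<le> t * real n ^ 2" using t by (intro mult_left_mono) auto
    moreover have "real s * (8 * \<delta>) = t * real s / real n ^ 2" unfolding \<delta>_def by simp
    ultimately show "real s * (8 * \<delta>) \<le> t" using n2 t by (simp add: divide_le_eq)
  qed (use d t in auto)
  then have "card B \<le> ((card (grid_gates N \<delta> k) + 1) ^ N + 1) ^ D"
    unfolding N_def using es by (intro card_approximable_le_grid_circuits[OF B approx d k, where \<eta> = "3 * t"]) auto
  also have "\<dots> \<le> (4 * (N * N * nat (2 * k + 1) ^ 32)) ^ (N * D)"
    using n k0 unfolding N_def by (intro card_grid_circuits_bound) auto
  finally have "real (card B) \<le> real ((4 * (N * N * nat (2 * k + 1) ^ 32)) ^ (N * D))"
    by (simp only: of_nat_le_iff)
  also have "\<dots> = (4 * real N ^ 2 * real (nat (2 * k + 1)) ^ 32) ^ (N * D)"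
    by (simp add: power2_eq_square power_mult_distrib mult.assoc)
  also have "\<dots> \<le> (4 * (21 / t) ^ 32 * real N ^ 66) ^ (N * D)"
  proof (intro power_mono grid_count_base_le[OF t n2 _ _ k0])
    have "real_of_int \<lceil>1 / \<delta>\<rceil> < 1 / \<delta> + 1" by linarith
    moreover have "1 / \<delta> = 8 * real n ^ 2 / t" unfolding \<delta>_def by simp
    ultimately show "real_of_int k \<le> 8 * real n ^ 2 / t + 2" unfolding k_def by simp
  qed (simp_all add: N_def)
  finally show ?thesis unfolding N_def .
qed

lemma power_le_two_powr_if_log_le:
  assumes "(Z::real) > 0" "real k * log 2 Z \<le> y"
  shows "Z ^ k \<le> 2 powr y"
proof -
  have "Z ^ k = (2 powr log 2 Z) powr real k" using assms(1) by (simp add: powr_realpow[symmetric])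
  also have "\<dots> = 2 powr (real k * log 2 Z)" by (simp add: powr_powr mult.commute)
  finally show ?thesis using assms(2) by simp
qed

lemma log_grid_constant_nonneg: "0 < t \<Longrightarrow> t \<le> 1 \<Longrightarrow> 0 \<le> log 2 (4 * (21 / t) ^ 32)"
proof -
  assume "0 < t" "t \<le> 1"
  then have "1 \<le> (21 / t) ^ 32" by (simp add: le_divide_eq one_le_power)
  then show ?thesis by (subst zero_le_log_cancel_iff) auto
qed

definition shallow_approximable :: "nat \<Rightarrow> nat \<Rightarrow> real \<Rightarrow> real \<Rightarrow> bit mat set" where
  "shallow_approximable n m eps d = {M \<in> GL2 n. \<exists>C. approximates n m eps C M \<and> real (depth C) < d}"

lemma shallow_approximable_subset: "shallow_approximable n m eps d \<subseteq> GL2 n"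
  unfolding shallow_approximable_def by blast

lemma shallow_approximable_max:
  "shallow_approximable n m eps (max d d') = shallow_approximable n m eps d \<union> shallow_approximable n m eps d'"
  unfolding shallow_approximable_def by (auto simp: less_max_iff_disj)

lemma card_shallow_approximable_quadratic_le:
  fixes eps t c K :: real
  assumes t: "0 < t" "t \<le> 1" and es: "2 * eps + 6 * t \<le> sqrt 2"
    and K: "K = log 2 (4 * (21 / t) ^ 32)" and c: "0 < c" "c * (K + 66) \<le> 1 / 8" and n: "n \<ge> 2"
  shows "real (card (shallow_approximable n m eps (c * (real n ^ 2 / (real (n + m) * log 2 (real (n + m)))))))
    \<le> 2 powr (real n ^ 2 / 8)"
proof -
  define N where "N = n + m"
  define lN where "lN = log 2 (real N)"
  define D where "D = nat \<lfloor>c * (real n ^ 2 / (real N * lN))\<rfloor>"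
  define Z where "Z = 4 * (21 / t) ^ 32 * real N ^ 66"
  have N: "N \<ge> 2" unfolding N_def using n by simp
  then have lN: "lN \<ge> 1" unfolding lN_def by simp
  have K0: "K \<ge> 0" unfolding K using t by (rule log_grid_constant_nonneg)
  have ND: "real (N * D) \<le> c * real n ^ 2 / lN"
  proof -
    have "real D \<le> c * (real n ^ 2 / (real N * lN))" unfolding D_def using c lN by simp
    then have "real N * real D \<le> real N * (c * (real n ^ 2 / (real N * lN)))" by (rule mult_left_mono) simp
    then show ?thesis using N by simp
  qed
  have "c * 66 \<le> c * (K + 66)" using c K0 by (intro mult_left_mono) auto
  then have "c \<le> 1" using c by linarith
  then have "c * real n ^ 2 \<le> lN * real n ^ 2" using lN by (intro mult_right_mono) auto
  then have "c * real n ^ 2 / lN \<le> real n ^ 2" using lN by (simp add: divide_le_eq mult.commute)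
  with ND have "N * D \<le> n\<^sup>2" by (metis of_nat_le_iff of_nat_power order_trans)
  then have "real (card (shallow_approximable n m eps (c * (real n ^ 2 / (real N * lN))))) \<le> Z ^ (N * D)"
    unfolding Z_def N_def
  proof (rule card_approximable_le[OF t es n])
    fix M assume "M \<in> shallow_approximable n m eps (c * (real n ^ 2 / (real (n + m) * lN)))"
    then obtain C where "approximates n m eps C M" "real (depth C) < c * (real n ^ 2 / (real (n + m) * lN))"
      unfolding shallow_approximable_def by blast
    then show "\<exists>C. approximates n m eps C M \<and> depth C \<le> D"
      unfolding D_def N_def by (intro exI[of _ C]) (auto simp: le_nat_iff le_floor_iff)
  qed (auto simp: shallow_approximable_def GL2_def)
  also have "\<dots> \<le> 2 powr (real n ^ 2 / 8)"
  proof (rule power_le_two_powr_if_log_le)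
    show "Z > 0" unfolding Z_def using t N by simp
    have "log 2 Z = K + 66 * lN"
      unfolding Z_def K lN_def using t N by (simp add: log_mult log_nat_power)
    also have "\<dots> \<le> (K + 66) * lN" using K0 lN by (simp add: algebra_simps mult_le_cancel_left1)
    finally have "real (N * D) * log 2 Z \<le> real (N * D) * ((K + 66) * lN)" by (rule mult_left_mono) simp
    also have "\<dots> \<le> c * real n ^ 2 / lN * ((K + 66) * lN)"
      using ND K0 lN by (intro mult_right_mono) auto
    also have "\<dots> = c * (K + 66) * real n ^ 2" using lN by (simp add: field_simps)
    also have "\<dots> \<le> 1 / 8 * real n ^ 2" using c by (intro mult_right_mono) auto
    finally show "real (N * D) * log 2 Z \<le> real n ^ 2 / 8" by simp
  qed
  finally show ?thesis unfolding N_def lN_def .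
qed

lemma exists_quadratic_depth_constant:
  fixes eps :: real
  assumes "eps < sqrt 2 / 2"
  obtains c where "0 < c" "c \<le> 1 / 4"
    "\<And>n m. n \<ge> 2 \<Longrightarrow> real (card (shallow_approximable n m eps
        (c * (real n ^ 2 / (real (n + m) * log 2 (real (n + m))))))) \<le> 2 powr (real n ^ 2 / 8)"
proof -
  define t where "t = min 1 ((sqrt 2 / 2 - eps) / 3)"
  define K where "K = log 2 (4 * (21 / t) ^ 32)"
  define c where "c = min (1 / 4) (1 / (8 * (K + 66)))"
  have "t \<le> (sqrt 2 / 2 - eps) / 3" unfolding t_def by (rule min.cobounded2)
  then have t: "0 < t" "t \<le> 1" "2 * eps + 6 * t \<le> sqrt 2" unfolding t_def using assms by auto
  have K0: "K \<ge> 0" unfolding K_def using t by (intro log_grid_constant_nonneg)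
  have "c * (K + 66) \<le> 1 / (8 * (K + 66)) * (K + 66)"
    unfolding c_def using K0 by (intro mult_right_mono) auto
  also have "\<dots> = 1 / 8" using K0 by (simp add: field_simps)
  finally have "c * (K + 66) \<le> 1 / 8" .
  moreover have "0 < c" "c \<le> 1 / 4" unfolding c_def using K0 by auto
  ultimately show ?thesis
    using that card_shallow_approximable_quadratic_le[OF t K_def] by blast
qed

section \<open>Local operators and light cones\<close>

text \<open>\<open>A\<close> acts as \<open>A\<^sub>S \<otimes> Id\<close>, where \<open>A\<^sub>S\<close> acts on the qubits in \<open>S\<close>.\<close>
definition local_on :: "nat \<Rightarrow> nat set \<Rightarrow> complex mat \<Rightarrow> bool" where
  "local_on N S A \<longleftrightarrow> A \<in> carrier_mat (2 ^ N) (2 ^ N) \<and>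
     (\<forall>x<2 ^ N. \<forall>y<2 ^ N. \<not> agree_off N S x y \<longrightarrow> A $$ (x, y) = 0) \<and>
     (\<forall>x<2 ^ N. \<forall>y<2 ^ N. \<forall>x'<2 ^ N. \<forall>y'<2 ^ N. agree_off N S x y \<longrightarrow> agree_off N S x' y' \<longrightarrow>
        (\<forall>i\<in>S. bit x i = bit x' i \<and> bit y i = bit y' i) \<longrightarrow> A $$ (x, y) = A $$ (x', y'))"

lemma local_on_carrier: "local_on N S A \<Longrightarrow> A \<in> carrier_mat (2 ^ N) (2 ^ N)"
  unfolding local_on_def by blast

lemma local_on_entry_zero:
  "local_on N S A \<Longrightarrow> x < 2 ^ N \<Longrightarrow> y < 2 ^ N \<Longrightarrow> \<not> agree_off N S x y \<Longrightarrow> A $$ (x, y) = 0"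
  unfolding local_on_def by blast

lemma local_on_entry_cong:
  assumes A: "local_on N S A" and xy: "x < 2 ^ N" "y < 2 ^ N" "x' < 2 ^ N" "y' < 2 ^ N"
    and on: "\<And>i. i < N \<Longrightarrow> i \<in> S \<Longrightarrow> bit x i = bit x' i \<and> bit y i = bit y' i"
    and off: "\<And>i. i < N \<Longrightarrow> i \<notin> S \<Longrightarrow> (bit x i = bit y i) \<longleftrightarrow> (bit x' i = bit y' i)"
  shows "A $$ (x, y) = A $$ (x', y')"
proof (cases "agree_off N S x y")
  case True
  then have "agree_off N S x' y'" using off unfolding agree_off_def by blast
  moreover have "bit x i = bit x' i \<and> bit y i = bit y' i" if "i \<in> S" for i
    using on[OF _ that] not_bit_ge_length[OF xy(1)] not_bit_ge_length[OF xy(2)]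
      not_bit_ge_length[OF xy(3)] not_bit_ge_length[OF xy(4)] by (cases "i < N") auto
  ultimately show ?thesis using A True xy unfolding local_on_def by blast
next
  case False
  then have "\<not> agree_off N S x' y'" using off unfolding agree_off_def by blast
  then show ?thesis using False local_on_entry_zero[OF A] xy by simp
qed

lemma local_onI:
  assumes "A \<in> carrier_mat (2 ^ N) (2 ^ N)"
    and "\<And>x y. x < 2 ^ N \<Longrightarrow> y < 2 ^ N \<Longrightarrow> \<not> agree_off N S x y \<Longrightarrow> A $$ (x, y) = 0"
    and "\<And>x y x' y'. x < 2 ^ N \<Longrightarrow> y < 2 ^ N \<Longrightarrow> x' < 2 ^ N \<Longrightarrow> y' < 2 ^ N \<Longrightarrow>
      agree_off N S x y \<Longrightarrow> agree_off N S x' y' \<Longrightarrow>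
      (\<And>i. i \<in> S \<Longrightarrow> bit x i = bit x' i \<and> bit y i = bit y' i) \<Longrightarrow> A $$ (x, y) = A $$ (x', y')"
  shows "local_on N S A"
  unfolding local_on_def using assms by blast

lemma local_on_mono:
  assumes A: "local_on N S A" and "S \<subseteq> S'"
  shows "local_on N S' A"
proof (rule local_onI)
  show "A \<in> carrier_mat (2 ^ N) (2 ^ N)" by (rule local_on_carrier[OF A])
  show "A $$ (x, y) = 0" if "x < 2 ^ N" "y < 2 ^ N" "\<not> agree_off N S' x y" for x y
    using local_on_entry_zero[OF A] agree_off_mono[OF _ assms(2)] that by blast
  show "A $$ (x, y) = A $$ (x', y')"
    if "x < 2 ^ N" "y < 2 ^ N" "x' < 2 ^ N" "y' < 2 ^ N" "agree_off N S' x y" "agree_off N S' x' y'"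
      "\<And>i. i \<in> S' \<Longrightarrow> bit x i = bit x' i \<and> bit y i = bit y' i" for x y x' y'
    using that assms(2) by (intro local_on_entry_cong[OF A]) (auto simp: agree_off_def)
qed

lemma gate_on_local_on:
  assumes G: "gate_on N Q G"
  shows "local_on N Q G"
proof -
  obtain g where g: "\<And>x y. x < 2 ^ N \<Longrightarrow> y < 2 ^ N \<Longrightarrow> G $$ (x, y) =
    (if agree_off N Q x y then g (\<lambda>i. i \<in> Q \<and> bit x i) (\<lambda>i. i \<in> Q \<and> bit y i) else 0)"
    using gate_on_entries[OF G] by blast
  show ?thesis
  proof (rule local_onI)
    show "G \<in> carrier_mat (2 ^ N) (2 ^ N)" by (rule gate_on_carrier[OF G])
    show "G $$ (x, y) = 0" if "x < 2 ^ N" "y < 2 ^ N" "\<not> agree_off N Q x y" for x y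
      using that by (simp add: g)
    show "G $$ (x, y) = G $$ (x', y')"
      if "x < 2 ^ N" "y < 2 ^ N" "x' < 2 ^ N" "y' < 2 ^ N" "agree_off N Q x y" "agree_off N Q x' y'"
        "\<And>i. i \<in> Q \<Longrightarrow> bit x i = bit x' i \<and> bit y i = bit y' i" for x y x' y'
    proof -
      have "(\<lambda>i. i \<in> Q \<and> bit x i) = (\<lambda>i. i \<in> Q \<and> bit x' i)"
        "(\<lambda>i. i \<in> Q \<and> bit y i) = (\<lambda>i. i \<in> Q \<and> bit y' i)" using that(7) by auto
      then show ?thesis using that by (simp add: g)
    qed
  qed
qed

lemma local_on_adjoint:
  assumes A: "local_on N S A"
  shows "local_on N S (mat_adjoint A)"
proof (rule local_onI)
  have Ac: "A \<in> carrier_mat (2 ^ N) (2 ^ N)" by (rule local_on_carrier[OF A])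
  then show "mat_adjoint A \<in> carrier_mat (2 ^ N) (2 ^ N)" by (rule carrier_mat_adjoint)
  have e: "mat_adjoint A $$ (x, y) = cnj (A $$ (y, x))" if "x < 2 ^ N" "y < 2 ^ N" for x y
    using Ac that by (simp add: index_mat_adjoint)
  show "mat_adjoint A $$ (x, y) = 0" if "x < 2 ^ N" "y < 2 ^ N" "\<not> agree_off N S x y" for x y
    using that e local_on_entry_zero[OF A, of y x] agree_off_sym[of N S y x] by auto
  show "mat_adjoint A $$ (x, y) = mat_adjoint A $$ (x', y')"
    if "x < 2 ^ N" "y < 2 ^ N" "x' < 2 ^ N" "y' < 2 ^ N" "agree_off N S x y" "agree_off N S x' y'"
      "\<And>i. i \<in> S \<Longrightarrow> bit x i = bit x' i \<and> bit y i = bit y' i" for x y x' y'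
    using that local_on_entry_cong[OF A, of y x y' x'] by (simp add: e agree_off_def)
qed

definition proj_qubit :: "nat \<Rightarrow> nat \<Rightarrow> complex mat" where
  "proj_qubit N i = mat (2 ^ N) (2 ^ N) (\<lambda>(x, y). if x = y \<and> bit x i then 1 else 0)"

lemma local_on_proj_qubit: "local_on N {i} (proj_qubit N i)"
proof (rule local_onI)
  show "proj_qubit N i \<in> carrier_mat (2 ^ N) (2 ^ N)" unfolding proj_qubit_def by simp
  show "proj_qubit N i $$ (x, y) = 0" if "x < 2 ^ N" "y < 2 ^ N" "\<not> agree_off N {i} x y" for x y
    using that unfolding proj_qubit_def agree_off_def by auto
  show "proj_qubit N i $$ (x, y) = proj_qubit N i $$ (x', y')"
    if "x < 2 ^ N" "y < 2 ^ N" "x' < 2 ^ N" "y' < 2 ^ N" "agree_off N {i} x y" "agree_off N {i} x' y'"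
      "\<And>j. j \<in> {i} \<Longrightarrow> bit x j = bit x' j \<and> bit y j = bit y' j" for x y x' y'
  proof -
    have "x = y \<longleftrightarrow> x' = y'"
      using that nat_eq_if_low_bits_eq[of x N y] nat_eq_if_low_bits_eq[of x' N y'] unfolding agree_off_def
      by (metis singletonD singletonI)
    then show ?thesis using that unfolding proj_qubit_def by simp
  qed
qed

lemma local_on_mult_entry_zero:
  assumes A: "local_on N S A" and B: "local_on N T B" and x: "x < 2 ^ N" and y: "y < 2 ^ N"
    and not_agree: "\<not> agree_off N (S \<union> T) x y"
  shows "(A * B) $$ (x, y) = 0"
proof -
  have "A $$ (x, z) * B $$ (z, y) = 0" if z: "z < 2 ^ N" for z
  proof (rule ccontr)
    assume "A $$ (x, z) * B $$ (z, y) \<noteq> 0"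
    then have "agree_off N S x z" "agree_off N T z y"
      using local_on_entry_zero[OF A x z] local_on_entry_zero[OF B z y] by auto
    then show False using not_agree unfolding agree_off_def by auto
  qed
  then have "(\<Sum>z<2 ^ N. A $$ (x, z) * B $$ (z, y)) = 0" by (intro sum.neutral) simp
  then show ?thesis
    using index_mult_mat_sum[OF local_on_carrier[OF A] local_on_carrier[OF B] x y] by simp
qed

text \<open>Shifting the summation index \<open>z\<close> to \<open>splice_bits N (S \<union> T) z x'\<close> matches the terms
  of the entries \<open>(x, y)\<close> and \<open>(x', y')\<close> of the product.\<close>
lemma local_on_mult:
  assumes A: "local_on N S A" and B: "local_on N T B"
  shows "local_on N (S \<union> T) (A * B)"
proof (rule local_onI)
  define W where "W = S \<union> T"
  have Ac: "A \<in> carrier_mat (2 ^ N) (2 ^ N)" and Bc: "B \<in> carrier_mat (2 ^ N) (2 ^ N)"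
    using local_on_carrier A B by auto
  show "A * B \<in> carrier_mat (2 ^ N) (2 ^ N)" using Ac Bc by simp
  show "(A * B) $$ (x, y) = 0" if "x < 2 ^ N" "y < 2 ^ N" "\<not> agree_off N (S \<union> T) x y" for x y
    using local_on_mult_entry_zero[OF A B] that by blast
  fix x y x' y' assume x: "x < 2 ^ N" and y: "y < 2 ^ N" and x': "x' < 2 ^ N" and y': "y' < 2 ^ N"
    and a: "agree_off N (S \<union> T) x y" and a': "agree_off N (S \<union> T) x' y'"
    and on: "\<And>i. i \<in> S \<union> T \<Longrightarrow> bit x i = bit x' i \<and> bit y i = bit y' i"
  define Z where "Z = {z. z < 2 ^ N \<and> agree_off N W x z}"
  define Z' where "Z' = {z. z < 2 ^ N \<and> agree_off N W x' z}"
  define f where "f z = A $$ (x, z) * B $$ (z, y)" for z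
  define f' where "f' z = A $$ (x', z) * B $$ (z, y')" for z
  have sum_Z: "(A * B) $$ (u, v) = (\<Sum>z\<in>{z. z < 2 ^ N \<and> agree_off N W u z}. A $$ (u, z) * B $$ (z, v))"
    if "u < 2 ^ N" "v < 2 ^ N" for u v
  proof -
    have "(\<Sum>z<2 ^ N. A $$ (u, z) * B $$ (z, v)) = (\<Sum>z\<in>{z. z < 2 ^ N \<and> agree_off N W u z}. A $$ (u, z) * B $$ (z, v))"
      using local_on_entry_zero[OF A that(1)] agree_off_mono[of N S u _ W]
      by (intro sum.mono_neutral_right) (auto simp: W_def)
    then show ?thesis using index_mult_mat_sum[OF Ac Bc that] by simp
  qed
  have bij: "bij_betw (\<lambda>z. splice_bits N W z x') Z Z'"
    unfolding Z_def Z'_def by (rule bij_betw_splice_bits)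
  have "f z = f' (splice_bits N W z x')" if "z \<in> Z" for z
  proof -
    have z: "z < 2 ^ N" and zx: "agree_off N W x z" using that unfolding Z_def by auto
    have bz: "i < N \<Longrightarrow> bit (splice_bits N W z x') i = (if i \<in> W then bit z i else bit x' i)" for i
      by (rule bit_splice_bits)
    have "A $$ (x, z) = A $$ (x', splice_bits N W z x')"
      using on zx bz by (intro local_on_entry_cong[OF A x z x' splice_bits_less])
        (auto simp: W_def agree_off_def)
    moreover have "B $$ (z, y) = B $$ (splice_bits N W z x', y')"
      using on zx a a' bz by (intro local_on_entry_cong[OF B z y splice_bits_less y'])
        (auto simp: W_def agree_off_def)
    ultimately show ?thesis unfolding f_def f'_def by simp
  qed
  then have "(\<Sum>z\<in>Z. f z) = (\<Sum>z\<in>Z'. f' z)"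
    using sum.reindex_bij_betw[OF bij, of f'] by simp
  then show "(A * B) $$ (x, y) = (A * B) $$ (x', y')"
    using sum_Z[OF x y] sum_Z[OF x' y'] unfolding Z_def Z'_def f_def f'_def by simp
qed

lemma local_on_mult_single_term:
  assumes A: "local_on N S A" and B: "local_on N T B" and disj: "S \<inter> T = {}"
    and x: "x < 2 ^ N" and y: "y < 2 ^ N" and a: "agree_off N (S \<union> T) x y"
  shows "(A * B) $$ (x, y) = A $$ (x, splice_bits N S y x) * B $$ (splice_bits N S y x, y)"
proof -
  let ?z = "splice_bits N S y x"
  have "A $$ (x, z) * B $$ (z, y) = 0" if z: "z < 2 ^ N" "z \<noteq> ?z" for z
  proof (rule ccontr)
    assume "A $$ (x, z) * B $$ (z, y) \<noteq> 0"
    then have "agree_off N S x z" "agree_off N T z y"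
      using local_on_entry_zero[OF A x z(1)] local_on_entry_zero[OF B z(1) y] by auto
    then have "z = ?z"
      using disj z(1) by (intro nat_eq_if_low_bits_eq[OF _ splice_bits_less])
        (auto simp: bit_splice_bits agree_off_def)
    then show False using z by simp
  qed
  then have "(\<Sum>z<2 ^ N. A $$ (x, z) * B $$ (z, y)) = A $$ (x, ?z) * B $$ (?z, y)"
    by (rule sum_lessThan_single[OF splice_bits_less])
  then show ?thesis
    using index_mult_mat_sum[OF local_on_carrier[OF A] local_on_carrier[OF B] x y] by simp
qed

lemma local_on_disjoint_commute:
  assumes A: "local_on N S A" and B: "local_on N T B" and disj: "S \<inter> T = {}"
  shows "A * B = B * A"
proof -
  have Ac: "A \<in> carrier_mat (2 ^ N) (2 ^ N)" and Bc: "B \<in> carrier_mat (2 ^ N) (2 ^ N)"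
    using local_on_carrier A B by auto
  show ?thesis
  proof (rule eq_matI)
    fix x y assume "x < dim_row (B * A)" "y < dim_col (B * A)"
    then have x: "x < 2 ^ N" and y: "y < 2 ^ N" using Ac Bc by auto
    show "(A * B) $$ (x, y) = (B * A) $$ (x, y)"
    proof (cases "agree_off N (S \<union> T) x y")
      case False
      then show ?thesis
        using local_on_mult_entry_zero[OF A B x y] local_on_mult_entry_zero[OF B A x y] by (simp add: Un_commute)
    next
      case True
      let ?z = "splice_bits N S y x" and ?w = "splice_bits N T y x"
      have xy: "bit x i = bit y i" if "i < N" "i \<notin> S" "i \<notin> T" for i
        using True that unfolding agree_off_def by auto
      have "A $$ (x, ?z) = A $$ (?w, y)"
        using disj xy by (intro local_on_entry_cong[OF A x splice_bits_less splice_bits_less y])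
          (auto simp: bit_splice_bits)
      moreover have "B $$ (?z, y) = B $$ (x, ?w)"
        using disj xy by (intro local_on_entry_cong[OF B splice_bits_less y x splice_bits_less])
          (auto simp: bit_splice_bits)
      ultimately show ?thesis
        using local_on_mult_single_term[OF A B disj x y True]
          local_on_mult_single_term[OF B A _ x y] True disj by (simp add: Un_commute Int_commute)
    qed
  qed (use Ac Bc in auto)
qed

definition conj_mat :: "complex mat \<Rightarrow> complex mat \<Rightarrow> complex mat" where
  "conj_mat A X = mat_adjoint X * A * X"

lemma conj_mat_mult:
  assumes A: "A \<in> carrier_mat D D" and X: "X \<in> carrier_mat D D" and Y: "Y \<in> carrier_mat D D"
  shows "conj_mat A (X * Y) = conj_mat (conj_mat A X) Y"
proof -
  have "mat_adjoint X \<in> carrier_mat D D" "mat_adjoint Y \<in> carrier_mat D D"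
    using carrier_mat_adjoint X Y by auto
  then show ?thesis
    unfolding conj_mat_def mat_adjoint_mult[OF X Y] using A X Y by (simp add: assoc_mult_mat[of _ D D _ D _ D])
qed

lemma conj_mat_one: "A \<in> carrier_mat D D \<Longrightarrow> conj_mat A (1\<^sub>m D) = A"
  unfolding conj_mat_def mat_adjoint_one by simp

lemma conj_mat_disjoint_gate:
  assumes G: "gate_on N Q G" and A: "local_on N S A" and disj: "Q \<inter> S = {}"
  shows "conj_mat A G = A"
proof -
  have Gc: "G \<in> carrier_mat (2 ^ N) (2 ^ N)" by (rule gate_on_carrier[OF G])
  have Ac: "A \<in> carrier_mat (2 ^ N) (2 ^ N)" by (rule local_on_carrier[OF A])
  have aG: "mat_adjoint G \<in> carrier_mat (2 ^ N) (2 ^ N)" using carrier_mat_adjoint Gc by auto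
  have "A * G = G * A" using local_on_disjoint_commute[OF A gate_on_local_on[OF G]] disj by blast
  then have "conj_mat A G = (mat_adjoint G * G) * A" unfolding conj_mat_def using aG Ac Gc by simp
  also have "mat_adjoint G * G = 1\<^sub>m (2 ^ N)" using gate_on_unitary[OF G] unfolding unitary_mat_def by blast
  finally show ?thesis using Ac by simp
qed

lemma local_on_conj_gate:
  assumes G: "gate_on N Q G" and A: "local_on N S A"
  shows "local_on N (S \<union> Q) (conj_mat A G)"
proof -
  have "local_on N ((Q \<union> S) \<union> Q) (conj_mat A G)"
    unfolding conj_mat_def by (intro local_on_mult local_on_adjoint gate_on_local_on[OF G] A)
  then show ?thesis by (rule local_on_mono) auto
qed

text \<open>The backward light cone of \<open>S\<close>: layers are processed from the last one to the first.\<close>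
definition light_cone_step :: "(nat set \<times> complex mat) list \<Rightarrow> nat set \<Rightarrow> nat set" where
  "light_cone_step L S = S \<union> \<Union>{fst g | g. g \<in> set L \<and> fst g \<inter> S \<noteq> {}}"

definition light_cone :: "(nat set \<times> complex mat) list list \<Rightarrow> nat set \<Rightarrow> nat set" where
  "light_cone C S = foldr light_cone_step C S"

lemma is_layer_ConsD:
  assumes "is_layer N ((Q, G) # L)"
  shows "gate_on N Q G" "is_layer N L" "\<And>Q' G'. (Q', G') \<in> set L \<Longrightarrow> Q \<inter> Q' = {}"
proof -
  have disj: "fst (((Q, G) # L) ! i) \<inter> fst (((Q, G) # L) ! j) = {}"
    if "i < Suc (length L)" "j < Suc (length L)" "i \<noteq> j" for i j
    using assms that unfolding is_layer_def by auto
  show "gate_on N Q G" using assms unfolding is_layer_def by auto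
  have "fst (L ! i) \<inter> fst (L ! j) = {}" if "i < length L" "j < length L" "i \<noteq> j" for i j
    using disj[of "Suc i" "Suc j"] that by simp
  then show "is_layer N L" using assms unfolding is_layer_def by auto
  fix Q' G' assume "(Q', G') \<in> set L"
  then obtain j where "j < length L" "L ! j = (Q', G')" by (auto simp: in_set_conv_nth)
  then show "Q \<inter> Q' = {}" using disj[of 0 "Suc j"] by simp
qed

lemma is_layer_qubits_unique:
  assumes "is_layer N L" "g \<in> set L" "g' \<in> set L" "s \<in> fst g" "s \<in> fst g'"
  shows "g = g'"
proof -
  obtain a b where "a < length L" "L ! a = g" "b < length L" "L ! b = g'"
    using assms(2,3) by (auto simp: in_set_conv_nth)
  then show ?thesis using assms unfolding is_layer_def by blast
qed

lemma layer_op_carrier: "is_layer N L \<Longrightarrow> layer_op N L \<in> carrier_mat (2 ^ N) (2 ^ N)"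
  unfolding layer_op_eq_mat_list_prod using is_layer_gate_on gate_on_carrier
  by (intro mat_list_prod_carrier) fastforce

lemma local_on_conj_layer:
  assumes "is_layer N L" "local_on N S A"
  shows "local_on N (light_cone_step L S) (conj_mat A (layer_op N L))"
  using assms
proof (induction L arbitrary: S A)
  case Nil
  then show ?case
    using conj_mat_one[OF local_on_carrier[OF Nil(2)]] by (simp add: light_cone_step_def layer_op_def)
next
  case (Cons g L)
  obtain Q G where g: "g = (Q, G)" by force
  have G: "gate_on N Q G" and L: "is_layer N L" and disj: "\<And>Q' G'. (Q', G') \<in> set L \<Longrightarrow> Q \<inter> Q' = {}"
    using is_layer_ConsD Cons.prems(1) unfolding g by blast+
  define S1 where "S1 = (if Q \<inter> S = {} then S else S \<union> Q)"
  have "local_on N S1 (conj_mat A G)"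
    using conj_mat_disjoint_gate[OF G Cons.prems(2)] local_on_conj_gate[OF G Cons.prems(2)] Cons.prems(2)
    unfolding S1_def by auto
  from Cons.IH[OF L this] have "local_on N (light_cone_step L S1) (conj_mat A (layer_op N (g # L)))"
    using conj_mat_mult[OF local_on_carrier[OF Cons.prems(2)] gate_on_carrier[OF G] layer_op_carrier[OF L]]
    by (simp add: g layer_op_def)
  moreover have "light_cone_step L S1 \<subseteq> light_cone_step (g # L) S"
    using disj unfolding light_cone_step_def S1_def g by (auto split: if_splits)
  ultimately show ?case by (rule local_on_mono)
qed

lemma local_on_conj_circuit:
  assumes "is_circuit N C" "local_on N S A"
  shows "local_on N (light_cone C S) (conj_mat A (circuit_op N C))"
  using assms
proof (induction C arbitrary: S A rule: rev_induct)
  case Nil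
  then show ?case using conj_mat_one[OF local_on_carrier[OF Nil(2)]] by (simp add: circuit_op_def light_cone_def)
next
  case (snoc L C)
  have C: "is_circuit N C" and L: "is_layer N L" using snoc.prems(1) unfolding is_circuit_def by auto
  have "conj_mat A (circuit_op N (C @ [L])) = conj_mat (conj_mat A (layer_op N L)) (circuit_op N C)"
    using conj_mat_mult[OF local_on_carrier[OF snoc.prems(2)] layer_op_carrier[OF L] circuit_op_carrier[OF C]]
    by (simp add: circuit_op_def)
  then show ?case
    using snoc.IH[OF C local_on_conj_layer[OF L snoc.prems(2)]] by (simp add: light_cone_def)
qed

text \<open>Qubit \<open>s\<close> lies in at most one gate of a layer.\<close>
lemma card_layer_partners_le:
  assumes L: "is_layer N L"
  shows "finite (\<Union>{fst g | g. g \<in> set L \<and> s \<in> fst g}) \<and> card (\<Union>{fst g | g. g \<in> set L \<and> s \<in> fst g}) \<le> 2"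
proof (cases "\<exists>g\<in>set L. s \<in> fst g")
  case True
  then obtain g where g: "g \<in> set L" "s \<in> fst g" by blast
  have "gate_on N (fst g) (snd g)" using is_layer_gate_on[OF L] g(1) by simp
  then have Q: "fst g \<subseteq> {..<N}" "card (fst g) \<le> 2" using gate_on_qubits by auto
  have "\<Union>{fst g | g. g \<in> set L \<and> s \<in> fst g} = fst g"
    using is_layer_qubits_unique[OF L g(1) _ g(2)] g by blast
  then show ?thesis using Q finite_subset[OF Q(1)] by simp
next
  case False
  then have empty: "\<Union>{fst g | g. g \<in> set L \<and> s \<in> fst g} = {}" by blast
  show ?thesis unfolding empty by simp
qed

lemma card_light_cone_step_le:
  assumes L: "is_layer N L" and S: "finite S"
  shows "finite (light_cone_step L S) \<and> card (light_cone_step L S) \<le> 3 * card S"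
proof -
  define P where "P s = \<Union>{fst g | g. g \<in> set L \<and> s \<in> fst g}" for s
  have P: "finite (P s) \<and> card (P s) \<le> 2" for s
    unfolding P_def by (rule card_layer_partners_le[OF L])
  have sub: "light_cone_step L S \<subseteq> (\<Union>s\<in>S. insert s (P s))"
    unfolding light_cone_step_def P_def by blast
  have fin: "finite (\<Union>s\<in>S. insert s (P s))" using S P by blast
  have "card (light_cone_step L S) \<le> card (\<Union>s\<in>S. insert s (P s))" by (rule card_mono[OF fin sub])
  also have "\<dots> \<le> (\<Sum>s\<in>S. card (insert s (P s)))" by (rule card_UN_le[OF S])
  also have "\<dots> \<le> (\<Sum>s\<in>S. 3)"
  proof (intro sum_mono)
    fix s show "card (insert s (P s)) \<le> 3" using P[of s] by (simp add: card_insert_if)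
  qed
  finally show ?thesis using finite_subset[OF sub fin] by simp
qed

lemma card_light_cone_le:
  assumes "is_circuit N C" "finite S"
  shows "finite (light_cone C S) \<and> card (light_cone C S) \<le> 3 ^ depth C * card S"
  using assms(1)
proof (induction C)
  case (Cons L C)
  then have L: "is_layer N L" and IH: "finite (light_cone C S) \<and> card (light_cone C S) \<le> 3 ^ depth C * card S"
    unfolding is_circuit_def by auto
  have "light_cone (L # C) S = light_cone_step L (light_cone C S)" by (simp add: light_cone_def)
  moreover have "finite (light_cone_step L (light_cone C S)) \<and>
      card (light_cone_step L (light_cone C S)) \<le> 3 * card (light_cone C S)"
    using IH by (intro card_light_cone_step_le[OF L]) simp
  ultimately show ?case using IH by (simp add: depth_def)
qed (simp add: light_cone_def depth_def assms(2))

definition prob_one :: "nat \<Rightarrow> nat \<Rightarrow> complex vec \<Rightarrow> real" where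
  "prob_one N i \<psi> = (\<Sum>z\<in>{z. z < 2 ^ N \<and> bit z i}. (cmod (\<psi> $ z))\<^sup>2)"

lemma conj_mat_proj_qubit_diag:
  assumes U: "U \<in> carrier_mat (2 ^ N) (2 ^ N)" and x: "x < 2 ^ N"
  shows "conj_mat (proj_qubit N i) U $$ (x, x) = complex_of_real (prob_one N i (U *\<^sub>v unit_vec (2 ^ N) x))"
proof -
  define D where "D = (2::nat) ^ N"
  have U': "U \<in> carrier_mat D D" and x': "x < D" using U x unfolding D_def by auto
  have aU: "mat_adjoint U \<in> carrier_mat D D" by (rule carrier_mat_adjoint[OF U'])
  have P: "proj_qubit N i \<in> carrier_mat D D" unfolding proj_qubit_def D_def by simp
  have aUP: "(mat_adjoint U * proj_qubit N i) $$ (x, w) = (if bit w i then cnj (U $$ (w, x)) else 0)"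
    if w: "w < D" for w
  proof -
    have "(mat_adjoint U * proj_qubit N i) $$ (x, w) = mat_adjoint U $$ (x, w) * proj_qubit N i $$ (w, w)"
      unfolding index_mult_mat_sum[OF aU P x' w]
      by (rule sum_lessThan_single[OF w]) (use w in \<open>simp add: proj_qubit_def D_def\<close>)
    then show ?thesis using w x' U' by (simp add: proj_qubit_def D_def index_mat_adjoint)
  qed
  have "conj_mat (proj_qubit N i) U $$ (x, x) = (\<Sum>w<D. (mat_adjoint U * proj_qubit N i) $$ (x, w) * U $$ (w, x))"
    unfolding conj_mat_def using aU P by (intro index_mult_mat_sum[OF _ U' x' x']) simp
  also have "\<dots> = (\<Sum>w<D. if bit w i then complex_of_real ((cmod (U $$ (w, x)))\<^sup>2) else 0)"
  proof (intro sum.cong refl)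
    fix w assume "w \<in> {..<D}"
    moreover have "cnj z * z = complex_of_real ((cmod z)\<^sup>2)" for z
      using complex_norm_square[of z] by (simp only: mult.commute)
    ultimately show "(mat_adjoint U * proj_qubit N i) $$ (x, w) * U $$ (w, x)
        = (if bit w i then complex_of_real ((cmod (U $$ (w, x)))\<^sup>2) else 0)"
      by (simp only: aUP lessThan_iff) simp
  qed
  also have "\<dots> = (\<Sum>w\<in>{w \<in> {..<D}. bit w i}. complex_of_real ((cmod (U $$ (w, x)))\<^sup>2))"
    by (rule sum.inter_filter[symmetric]) simp
  also have "\<dots> = complex_of_real (\<Sum>w\<in>{w \<in> {..<D}. bit w i}. (cmod (U $$ (w, x)))\<^sup>2)"
    by (simp only: of_real_sum)
  also have "(\<Sum>w\<in>{w \<in> {..<D}. bit w i}. (cmod (U $$ (w, x)))\<^sup>2) = prob_one N i (U *\<^sub>v unit_vec (2 ^ N) x)"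
    unfolding prob_one_def D_def[symmetric] by (intro sum.cong) (auto simp: mult_mat_vec_unit_vec[OF U' x'])
  finally show ?thesis .
qed

text \<open>A unit vector within \<open>\<epsilon> < 1/\<surd>2\<close> of a basis vector \<open>e\<^sub>y\<close> has \<open>|\<psi>\<^sub>y| > 3/4\<close>,
  so measuring qubit \<open>i\<close> returns bit \<open>i\<close> of \<open>y\<close> with probability more than \<open>1/2\<close>.\<close>
lemma prob_one_close_unit_vec:
  fixes \<psi> :: "complex vec"
  assumes \<psi>: "\<psi> \<in> carrier_vec (2 ^ N)" "vnorm \<psi> = 1" and y: "y < 2 ^ N"
    and close: "vnorm (\<psi> - unit_vec (2 ^ N) y) < eps" and eps: "eps\<^sup>2 < 1 / 2"
  shows "if bit y i then prob_one N i \<psi> > 1 / 2 else prob_one N i \<psi> < 1 / 2"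
proof -
  define D where "D = (2::nat) ^ N"
  define a where "a = cmod (\<psi> $ y)"
  define rest where "rest = (\<Sum>z\<in>{..<D} - {y}. (cmod (\<psi> $ z))\<^sup>2)"
  have y': "y < D" using y unfolding D_def .
  have dv: "dim_vec \<psi> = D" using \<psi> unfolding D_def by simp
  have "(\<Sum>z<D. (cmod (\<psi> $ z))\<^sup>2) = 1" using vnorm_square[of \<psi>] \<psi>(2) dv by simp
  then have ra: "rest = 1 - a\<^sup>2" unfolding a_def rest_def using y' by (simp add: sum.remove[of "{..<D}" y])
  have "rest \<ge> 0" unfolding rest_def by (simp add: sum_nonneg)
  then have "a\<^sup>2 \<le> 1\<^sup>2" using ra by simp
  then have a1: "a \<le> 1" by (rule power2_le_imp_le) simp
  have "(vnorm (\<psi> - unit_vec D y))\<^sup>2 = (\<Sum>z<D. (cmod ((\<psi> - unit_vec D y) $ z))\<^sup>2)"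
    by (simp add: vnorm_square dv)
  also have "\<dots> = (cmod ((\<psi> - unit_vec D y) $ y))\<^sup>2 + (\<Sum>z\<in>{..<D} - {y}. (cmod ((\<psi> - unit_vec D y) $ z))\<^sup>2)"
    using y' by (simp add: sum.remove[of "{..<D}" y])
  also have "(\<Sum>z\<in>{..<D} - {y}. (cmod ((\<psi> - unit_vec D y) $ z))\<^sup>2) = rest"
    unfolding rest_def using y' dv by (intro sum.cong refl) auto
  also have "(\<psi> - unit_vec D y) $ y = \<psi> $ y - 1" using y' dv by simp
  finally have "(vnorm (\<psi> - unit_vec D y))\<^sup>2 = (cmod (\<psi> $ y - 1))\<^sup>2 + rest" .
  moreover have "(1 - a)\<^sup>2 \<le> (cmod (\<psi> $ y - 1))\<^sup>2"
    using a1 norm_triangle_ineq2[of 1 "\<psi> $ y"] unfolding a_def by (intro power_mono) (auto simp: norm_minus_commute)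
  moreover have "(vnorm (\<psi> - unit_vec D y))\<^sup>2 < eps\<^sup>2"
    using close vnorm_nonneg[of "\<psi> - unit_vec D y"] unfolding D_def by (intro power_strict_mono) auto
  ultimately have "(1 - a)\<^sup>2 + (1 - a\<^sup>2) < 1 / 2" using ra eps by linarith
  then have "a > 3 / 4" by (simp add: power2_eq_square algebra_simps)
  then have "(3 / 4)\<^sup>2 < a\<^sup>2" by (intro power_strict_mono) auto
  then have asq: "a\<^sup>2 > 9 / 16" by (simp add: power2_eq_square)
  show ?thesis
  proof (cases "bit y i")
    case True
    have "a\<^sup>2 \<le> prob_one N i \<psi>" unfolding prob_one_def a_def
      by (rule member_le_sum[where f = "\<lambda>z. (cmod (\<psi> $ z))\<^sup>2"]) (use True y in auto)
    then show ?thesis using True asq by simp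
  next
    case False
    have "prob_one N i \<psi> \<le> rest" unfolding prob_one_def rest_def D_def
      by (rule sum_mono2) (use False in auto)
    then show ?thesis using False ra asq by simp
  qed
qed

lemma prob_one_circuit_op_light_cone_eq:
  assumes C: "is_circuit N C" and x: "x < 2 ^ N" "x' < 2 ^ N"
    and eq: "\<And>k. k \<in> light_cone C {i} \<Longrightarrow> bit x k = bit x' k"
  shows "prob_one N i (circuit_op N C *\<^sub>v unit_vec (2 ^ N) x) = prob_one N i (circuit_op N C *\<^sub>v unit_vec (2 ^ N) x')"
proof -
  have "local_on N (light_cone C {i}) (conj_mat (proj_qubit N i) (circuit_op N C))"
    by (rule local_on_conj_circuit[OF C local_on_proj_qubit])
  then have "conj_mat (proj_qubit N i) (circuit_op N C) $$ (x, x) = conj_mat (proj_qubit N i) (circuit_op N C) $$ (x', x')"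
    by (rule local_on_entry_cong[OF _ x(1) x(1) x(2) x(2)]) (simp_all add: eq)
  then show ?thesis unfolding conj_mat_proj_qubit_diag[OF circuit_op_carrier[OF C] x(1)]
    conj_mat_proj_qubit_diag[OF circuit_op_carrier[OF C] x(2)] by simp
qed

text \<open>Inputs \<open>0\<close> and \<open>e\<^sub>j\<close> differ only at qubit \<open>j\<close>, but for \<open>M\<^sub>i\<^sub>j = 1\<close> the outputs
  differ at qubit \<open>i\<close>, which the circuit must detect with probability above \<open>1/2\<close>.\<close>
lemma approximates_row_support_light_cone:
  assumes ap: "approximates n m eps C M" and M: "M \<in> carrier_mat n n" and eps: "eps < sqrt 2 / 2"
    and i: "i < n" and j: "j < n" and Mij: "M $$ (i, j) = 1"
  shows "j \<in> light_cone C {i}"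
proof (rule ccontr)
  assume nj: "j \<notin> light_cone C {i}"
  define N where "N = n + m"
  have C: "is_circuit N C" using approximates_is_circuit[OF ap] unfolding N_def .
  define U where "U = circuit_op N C"
  have nN: "(2::nat) ^ n \<le> 2 ^ N" unfolding N_def by (simp add: power_increasing)
  have bidx_N: "bidx v < 2 ^ N" if "dim_vec v = n" for v using less_le_trans[OF bidx_less[OF that] nN] .
  define v0 :: "bit vec" where "v0 = 0\<^sub>v n"
  define v1 :: "bit vec" where "v1 = unit_vec n j"
  have v: "v0 \<in> carrier_vec n" "v1 \<in> carrier_vec n" unfolding v0_def v1_def by auto
  have "bit (bidx v0) k = bit (bidx v1) k" if "k \<in> light_cone C {i}" for k
    using that nj bit_bidx[of v0 n k] bit_bidx[of v1 n k] unfolding v0_def v1_def by (auto simp: unit_vec_def split: if_splits)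
  then have peq: "prob_one N i (U *\<^sub>v unit_vec (2 ^ N) (bidx v0)) = prob_one N i (U *\<^sub>v unit_vec (2 ^ N) (bidx v1))"
    unfolding U_def using v by (intro prob_one_circuit_op_light_cone_eq[OF C] bidx_N) auto
  have "0 \<le> eps" using approximates_output_close[OF ap M v(1)] vnorm_nonneg by (meson le_less_trans less_imp_le)
  then have "eps\<^sup>2 < (sqrt 2 / 2)\<^sup>2" using eps by (intro power_strict_mono) auto
  then have eps2: "eps\<^sup>2 < 1 / 2" by (simp add: power_divide)
  have prob: "if bit (bidx (M *\<^sub>v v)) i then prob_one N i (U *\<^sub>v unit_vec (2 ^ N) (bidx v)) > 1 / 2
      else prob_one N i (U *\<^sub>v unit_vec (2 ^ N) (bidx v)) < 1 / 2" if "v \<in> carrier_vec n" for v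
  proof (rule prob_one_close_unit_vec[OF _ _ _ _ eps2])
    show "U *\<^sub>v unit_vec (2 ^ N) (bidx v) \<in> carrier_vec (2 ^ N)" using circuit_op_carrier[OF C] U_def by simp
    show "vnorm (U *\<^sub>v unit_vec (2 ^ N) (bidx v)) = 1"
      unfolding U_def using vnorm_circuit_op[OF C] vnorm_unit_vec bidx_N that by simp
    show "bidx (M *\<^sub>v v) < 2 ^ N" using M by (intro bidx_N) simp
    show "vnorm (U *\<^sub>v unit_vec (2 ^ N) (bidx v) - unit_vec (2 ^ N) (bidx (M *\<^sub>v v))) < eps"
      using approximates_output_close[OF ap M that] unfolding U_def N_def .
  qed
  have "M *\<^sub>v v0 = 0\<^sub>v n" unfolding v0_def using M by (intro eq_vecI) (auto simp: scalar_prod_def)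
  then have "\<not> bit (bidx (M *\<^sub>v v0)) i" using bit_bidx[of "M *\<^sub>v v0" n i] M by simp
  moreover have "bit (bidx (M *\<^sub>v v1)) i" using bit_bidx[of "M *\<^sub>v v1" n i] M i j Mij unfolding v1_def by simp
  ultimately show False using prob[OF v(1)] prob[OF v(2)] peq by simp
qed

lemma approximates_row_weight_le:
  assumes "approximates n m eps C M" "M \<in> carrier_mat n n" "eps < sqrt 2 / 2" "i < n"
  shows "card {j. j < n \<and> M $$ (i, j) = 1} \<le> 3 ^ depth C"
proof -
  have L: "finite (light_cone C {i}) \<and> card (light_cone C {i}) \<le> 3 ^ depth C * card {i}"
    using approximates_is_circuit[OF assms(1)] by (intro card_light_cone_le) auto
  have "{j. j < n \<and> M $$ (i, j) = 1} \<subseteq> light_cone C {i}"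
    using approximates_row_support_light_cone[OF assms] by auto
  then have "card {j. j < n \<and> M $$ (i, j) = 1} \<le> card (light_cone C {i})" using L by (intro card_mono) auto
  then show ?thesis using L by simp
qed

section \<open>Counting matrices over GF(2)\<close>

lemma UNIV_bit: "(UNIV :: bit set) = {0, 1}"
  using bit_cases by auto

lemma finite_carrier_mat_bit: "finite (carrier_mat n k :: bit mat set)"
proof -
  have "carrier_mat n k \<subseteq> (\<lambda>f. mat n k f) ` PiE ({..<n} \<times> {..<k}) (\<lambda>_. UNIV :: bit set)"
  proof
    fix A :: "bit mat" assume A: "A \<in> carrier_mat n k"
    then have "A = mat n k (restrict (\<lambda>ij. A $$ ij) ({..<n} \<times> {..<k}))" by (intro eq_matI) auto
    then show "A \<in> (\<lambda>f. mat n k f) ` PiE ({..<n} \<times> {..<k}) (\<lambda>_. UNIV :: bit set)" by force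
  qed
  moreover have "finite ((\<lambda>f. mat n k f) ` PiE ({..<n} \<times> {..<k}) (\<lambda>_. UNIV :: bit set))"
    by (intro finite_imageI finite_PiE) (auto simp: UNIV_bit)
  ultimately show ?thesis by (rule finite_subset)
qed

lemma finite_GL2: "finite (GL2 n)"
  using finite_carrier_mat_bit by (rule finite_subset[rotated]) (auto simp: GL2_def)

lemma invertible_mat_if_det_nonzero:
  fixes A :: "bit mat"
  assumes A: "A \<in> carrier_mat n n" and "det A \<noteq> 0"
  shows "invertible_mat A"
proof -
  have "A \<in> Units (ring_mat TYPE(bit) n undefined)" by (rule det_non_zero_imp_unit[OF assms])
  then obtain B where "B \<in> carrier_mat n n" "B * A = 1\<^sub>m n" "A * B = 1\<^sub>m n"
    unfolding Units_def ring_mat_def by auto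
  then show ?thesis unfolding invertible_mat_def inverts_mat_def using A by auto
qed

text \<open>The unitriangular block matrices \<open>[[I, F], [0, I]]\<close> with an arbitrary
  \<open>\<lfloor>n/2\<rfloor> \<times> \<lceil>n/2\<rceil>\<close> block \<open>F\<close> are distinct elements of \<open>GL(n, 2)\<close>.\<close>
lemma card_GL2_ge: "2 ^ (n div 2 * (n - n div 2)) \<le> card (GL2 n)"
proof -
  define I where "I = {..<n div 2} \<times> {n div 2..<n}"
  define F where "F = PiE I (\<lambda>_. UNIV :: bit set)"
  define blk :: "(nat \<times> nat \<Rightarrow> bit) \<Rightarrow> bit mat"
    where "blk f = mat n n (\<lambda>(i, j). if i = j then 1 else if (i, j) \<in> I then f (i, j) else 0)" for f
  have "blk f \<in> GL2 n" for f
  proof -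
    have c: "blk f \<in> carrier_mat n n" unfolding blk_def by simp
    have "upper_triangular (blk f)" unfolding upper_triangular_def blk_def I_def by auto
    then have "det (blk f) = prod_list (diag_mat (blk f))" by (rule det_upper_triangular[OF _ c])
    also have "diag_mat (blk f) = map (\<lambda>_. 1) [0..<n]" unfolding diag_mat_def blk_def by auto
    finally have "det (blk f) = 1" by (simp add: prod_list_replicate[symmetric] map_replicate_const)
    then show ?thesis unfolding GL2_def using c invertible_mat_if_det_nonzero[OF c] by simp
  qed
  moreover have "inj_on blk F"
  proof (rule inj_onI)
    fix f g assume f: "f \<in> F" and g: "g \<in> F" and e: "blk f = blk g"
    show "f = g"
    proof (rule PiE_ext[OF f[unfolded F_def] g[unfolded F_def]])
      fix p assume p: "p \<in> I"
      then obtain i j where "p = (i, j)" "i < n" "j < n" "i \<noteq> j" unfolding I_def by auto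
      then show "f p = g p" using arg_cong[OF e, of "\<lambda>A. A $$ (i, j)"] p by (simp add: blk_def)
    qed
  qed
  ultimately have "card F \<le> card (GL2 n)" using finite_GL2 by (intro card_inj_on_le) auto
  moreover have "card F = 2 ^ (n div 2 * (n - n div 2))"
    unfolding F_def I_def by (simp add: card_PiE card_cartesian_product UNIV_bit numeral_2_eq_2)
  ultimately show ?thesis by simp
qed

lemma card_GL2_ge_powr: "2 powr ((real n ^ 2 - 1) / 4) \<le> real (card (GL2 n))"
proof -
  define a where "a = n div 2"
  have "(real n ^ 2 - 1) / 4 \<le> real (a * (n - a))"
    by (cases "even n") (auto simp: a_def power2_eq_square algebra_simps elim!: evenE oddE)
  then have "2 powr ((real n ^ 2 - 1) / 4) \<le> 2 powr real (a * (n - a))" by simp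
  also have "\<dots> = (2::real) ^ (a * (n - a))" by (rule powr_realpow) simp
  also have "\<dots> = real (2 ^ (a * (n - a)))" by simp
  also have "\<dots> \<le> real (card (GL2 n))" unfolding a_def using card_GL2_ge by (simp only: of_nat_le_iff)
  finally show ?thesis .
qed

lemma card_small_subsets_le: "card {S. S \<subseteq> {..<n} \<and> card S \<le> w} \<le> (n + 1) ^ w"
proof -
  let ?L = "{xs. length xs \<le> w \<and> set xs \<subseteq> {..<n}}"
  have L: "finite ?L \<and> card ?L \<le> (n + 1) ^ w" using card_lists_length_le_power[of "{..<n}" w] by simp
  have "{S. S \<subseteq> {..<n} \<and> card S \<le> w} \<subseteq> set ` ?L"
  proof
    fix S assume S: "S \<in> {S. S \<subseteq> {..<n} \<and> card S \<le> w}"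
    then have "finite S" using finite_subset by blast
    then show "S \<in> set ` ?L" using S by (intro image_eqI[where x="sorted_list_of_set S"]) auto
  qed
  then have "card {S. S \<subseteq> {..<n} \<and> card S \<le> w} \<le> card (set ` ?L)" using L by (intro card_mono) auto
  also have "\<dots> \<le> card ?L" using L by (intro card_image_le) auto
  finally show ?thesis using L by simp
qed

lemma card_sparse_rows_le:
  "card {M :: bit mat. M \<in> carrier_mat n n \<and> (\<forall>i<n. card {j. j < n \<and> M $$ (i, j) = 1} \<le> w)}
    \<le> (n + 1) ^ (w * n)"
proof -
  let ?B = "{M :: bit mat. M \<in> carrier_mat n n \<and> (\<forall>i<n. card {j. j < n \<and> M $$ (i, j) = 1} \<le> w)}"
  let ?R = "{S. S \<subseteq> {..<n} \<and> card S \<le> w}"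
  define rows where "rows M = restrict (\<lambda>i. {j. j < n \<and> M $$ (i, j) = 1}) {..<n}" for M :: "bit mat"
  have inj: "inj_on rows ?B"
  proof (rule inj_onI)
    fix M M' assume M: "M \<in> ?B" and M': "M' \<in> ?B" and e: "rows M = rows M'"
    show "M = M'"
    proof (rule eq_matI)
      fix i j assume "i < dim_row M'" "j < dim_col M'"
      then have i: "i < n" and j: "j < n" using M' by auto
      have "M $$ (i, j) = 1 \<longleftrightarrow> M' $$ (i, j) = 1" using fun_cong[OF e, of i] i j unfolding rows_def by auto
      then show "M $$ (i, j) = M' $$ (i, j)" using bit_cases[of "M $$ (i, j)"] bit_cases[of "M' $$ (i, j)"] by auto
    qed (use M M' in auto)
  qed
  moreover have "rows ` ?B \<subseteq> PiE {..<n} (\<lambda>_. ?R)" unfolding rows_def by auto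
  moreover have "finite ?R" by (rule finite_subset[of _ "Pow {..<n}"]) auto
  ultimately have "card ?B \<le> card (PiE {..<n} (\<lambda>_. ?R))" by (intro card_inj_on_le) (auto simp: finite_PiE)
  also have "\<dots> = card ?R ^ n" by (simp add: card_PiE)
  also have "\<dots> \<le> ((n + 1) ^ w) ^ n" by (rule power_mono[OF card_small_subsets_le]) simp
  finally show ?thesis by (simp add: power_mult)
qed

lemma card_shallow_approximable_log_le:
  assumes eps: "eps < sqrt 2 / 2" and n: "n \<ge> 1" and d: "d \<le> log 2 (real n) / 4"
  shows "real (card (shallow_approximable n m eps d)) \<le> (real n + 1) powr (sqrt (real n) * real n)"
proof -
  define w where "w = nat \<lfloor>sqrt (real n)\<rfloor>"
  have sparse: "card {j. j < n \<and> M $$ (i, j) = 1} \<le> w"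
    if M: "M \<in> shallow_approximable n m eps d" and i: "i < n" for M i
  proof -
    obtain C where Mc: "M \<in> carrier_mat n n" and ap: "approximates n m eps C M" and C: "real (depth C) < d"
      using M unfolding shallow_approximable_def GL2_def by auto
    have "real (card {j. j < n \<and> M $$ (i, j) = 1}) \<le> 3 ^ depth C"
      using approximates_row_weight_le[OF ap Mc eps i] by (simp flip: of_nat_le_iff)
    also have "\<dots> \<le> 4 ^ depth C" by (rule power_mono) auto
    also have "(4::real) ^ depth C = 2 ^ (2 * depth C)" by (simp add: power_mult)
    also have "\<dots> = 2 powr real (2 * depth C)" by (rule powr_realpow[symmetric]) simp
    also have "\<dots> \<le> 2 powr (log 2 (real n) / 2)" using C d by simp
    also have "\<dots> = (2 powr log 2 (real n)) powr (1 / 2)" by (simp add: powr_powr)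
    also have "\<dots> = sqrt (real n)" using n by (simp add: powr_half_sqrt)
    finally show ?thesis unfolding w_def by (simp add: le_nat_floor)
  qed
  let ?B = "{M :: bit mat. M \<in> carrier_mat n n \<and> (\<forall>i<n. card {j. j < n \<and> M $$ (i, j) = 1} \<le> w)}"
  have "shallow_approximable n m eps d \<subseteq> ?B"
    using sparse by (auto simp: shallow_approximable_def GL2_def)
  moreover have "finite ?B" by (rule finite_subset[OF _ finite_carrier_mat_bit[of n n]]) auto
  ultimately have "card (shallow_approximable n m eps d) \<le> card ?B" by (intro card_mono)
  also have "\<dots> \<le> (n + 1) ^ (w * n)" by (rule card_sparse_rows_le)
  finally have "card (shallow_approximable n m eps d) \<le> (n + 1) ^ (w * n)" .
  then have "real (card (shallow_approximable n m eps d)) \<le> real ((n + 1) ^ (w * n))"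
    by (simp only: of_nat_le_iff)
  also have "\<dots> = (real n + 1) ^ (w * n)" by (simp add: add.commute)
  also have "\<dots> = (real n + 1) powr real (w * n)" by (rule powr_realpow[symmetric]) simp
  also have "\<dots> \<le> (real n + 1) powr (sqrt (real n) * real n)"
  proof (rule powr_mono)
    have "real w \<le> sqrt (real n)" unfolding w_def by simp
    then show "real (w * n) \<le> sqrt (real n) * real n" by (simp add: mult_right_mono)
  qed simp
  finally show ?thesis .
qed

section \<open>Most matrices need deep circuits\<close>

lemma card_diff_ratio_tendsto_1:
  fixes A B :: "nat \<Rightarrow> 'a set" and a b :: "nat \<Rightarrow> real"
  assumes fin: "\<And>n. finite (A n)" and sub: "\<And>n. B n \<subseteq> A n"
    and a: "\<And>n. 0 < a n" "\<And>n. a n \<le> real (card (A n))"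
    and b: "\<forall>\<^sub>F n in sequentially. real (card (B n)) \<le> b n" and lim: "(\<lambda>n. b n / a n) \<longlonglongrightarrow> 0"
  shows "(\<lambda>n. real (card (A n - B n)) / real (card (A n))) \<longlonglongrightarrow> 1"
proof (rule tendsto_sandwich[OF _ _ tendsto_diff[OF tendsto_const lim, simplified] tendsto_const])
  have pos: "0 < real (card (A n))" for n using a(1)[of n] a(2)[of n] by linarith
  have ratio: "real (card (A n - B n)) / real (card (A n)) = 1 - real (card (B n)) / real (card (A n))" for n
    using pos[of n] card_mono[OF fin sub] by (simp add: card_Diff_subset[OF finite_subset[OF sub fin] sub] field_simps)
  show "\<forall>\<^sub>F n in sequentially. real (card (A n - B n)) / real (card (A n)) \<le> 1"
    using pos by (simp add: ratio)
  show "\<forall>\<^sub>F n in sequentially. 1 - b n / a n \<le> real (card (A n - B n)) / real (card (A n))"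
    using b
  proof eventually_elim
    case (elim n)
    then have "real (card (B n)) / real (card (A n)) \<le> b n / a n"
      using a by (intro frac_le) auto
    then show ?case by (simp add: ratio)
  qed
qed

lemma exists_depth_constant:
  fixes eps :: real
  assumes eps: "eps < sqrt 2 / 2"
  obtains c where "0 < c" "\<And>n m. n \<ge> 2 \<Longrightarrow>
    real (card (shallow_approximable n m eps (c * max (log 2 (real n))
      ((real n)\<^sup>2 / (real (n + m) * log 2 (real (n + m)))))))
    \<le> (real n + 1) powr (sqrt (real n) * real n) + 2 powr ((real n)\<^sup>2 / 8)"
proof -
  obtain c where c: "0 < c" "c \<le> 1 / 4" and quadratic: "\<And>n m. n \<ge> 2 \<Longrightarrow>
      real (card (shallow_approximable n m eps (c * ((real n)\<^sup>2 / (real (n + m) * log 2 (real (n + m)))))))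
        \<le> 2 powr ((real n)\<^sup>2 / 8)"
    using exists_quadratic_depth_constant[OF eps] by blast
  have "real (card (shallow_approximable n m eps (c * max (log 2 (real n))
      ((real n)\<^sup>2 / (real (n + m) * log 2 (real (n + m)))))))
    \<le> (real n + 1) powr (sqrt (real n) * real n) + 2 powr ((real n)\<^sup>2 / 8)" if n: "n \<ge> 2" for n m
  proof -
    have "c * log 2 (real n) \<le> 1 / 4 * log 2 (real n)" using c n by (intro mult_right_mono) auto
    then have "real (card (shallow_approximable n m eps (c * log 2 (real n))))
        \<le> (real n + 1) powr (sqrt (real n) * real n)"
      using n by (intro card_shallow_approximable_log_le[OF eps]) auto
    moreover have "card (shallow_approximable n m eps (c * max (log 2 (real n))
          ((real n)\<^sup>2 / (real (n + m) * log 2 (real (n + m))))))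
        \<le> card (shallow_approximable n m eps (c * log 2 (real n)))
          + card (shallow_approximable n m eps (c * ((real n)\<^sup>2 / (real (n + m) * log 2 (real (n + m))))))"
      using c(1) by (simp add: max_mult_distrib_left shallow_approximable_max card_Un_le)
    ultimately show ?thesis using quadratic[OF n, of m] by linarith
  qed
  with c(1) show ?thesis using that by blast
qed

theorem theorem2:
  fixes eps :: real
  assumes "0 < eps" and "eps < sqrt 2 / 2"
  shows "\<exists>c>0. \<forall>m :: nat \<Rightarrow> nat.
    (\<lambda>n. real (card {M \<in> GL2 n. \<forall>C. approximates n (m n) eps C M \<longrightarrow>
          real (depth C) \<ge> c * max (log 2 (real n))
             ((real n)\<^sup>2 / (real (n + m n) * log 2 (real (n + m n))))})
        / real (card (GL2 n))) \<longlonglongrightarrow> 1"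
proof -
  obtain c where c: "0 < c" and bound: "\<And>n m. n \<ge> 2 \<Longrightarrow>
    real (card (shallow_approximable n m eps (c * max (log 2 (real n))
      ((real n)\<^sup>2 / (real (n + m) * log 2 (real (n + m)))))))
    \<le> (real n + 1) powr (sqrt (real n) * real n) + 2 powr ((real n)\<^sup>2 / 8)"
    using exists_depth_constant[OF assms(2)] by blast
  have "(\<lambda>n. real (card (GL2 n - shallow_approximable n (m n) eps (c * max (log 2 (real n))
      ((real n)\<^sup>2 / (real (n + m n) * log 2 (real (n + m n))))))) / real (card (GL2 n))) \<longlonglongrightarrow> 1"
    for m :: "nat \<Rightarrow> nat"
    by (rule card_diff_ratio_tendsto_1[OF finite_GL2 shallow_approximable_subset _ card_GL2_ge_powr
          eventually_sequentiallyI[of 2, OF bound]]) (simp, simp, real_asymp)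
  moreover have "{M \<in> GL2 n. \<forall>C. approximates n (m n) eps C M \<longrightarrow> real (depth C) \<ge> d}
      = GL2 n - shallow_approximable n (m n) eps d" for n m d
    unfolding shallow_approximable_def by (auto simp: not_le)
  ultimately show ?thesis using c by auto
qed

end
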